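(* Let $E,F$ be unital operator systems and let $\phi:E\to F$ be a ucp map which is the restriction of a $*$-homomorphism between the $C^*$-envelopes, i.e. there is a $*$-homomorphism $\widetilde\phi:C^*_{\mathrm{env}}(E)\to C^*_{\mathrm{env}}(F)$ with $\iota_F\circ\phi=\widetilde\phi\circ\iota_E$. Then the map $\phi^*:\mathcal V(E)\to\mathcal V(F)$, $[x]\mapsto[\phi^{(n)}(x)]$ for $x\in H(E,n)$, is a well-defined semigroup homomorphism, and it induces a group homomorphism $\phi^*:K_0(E)\to K_0(F)$.
   Context: For a unital operator system $(E,e)$ (matrix-ordered $*$-vector space with Archimedean matrix order unit $e$) with $C^*$-envelope embedding $\iota_E:E\to C^*_{\mathrm{env}}(E)$: a self-adjoint $x\in M_n(E)$ is a hermitian form if there is $g>0$ with $|\psi^{(n)}(x)|\ge g\cdot\mathrm{id}^{\oplus n}$ for all pure and maximal ucp maps $\psi:E\to B(\mathcal H)$; equivalently $\iota^{(n)}_E(x)$ is invertible. $H(E,n)$ is the set of hermitian forms in $M_n(E)$; $x\sim_n x'$ if joined by a norm-continuous path in $H(E,n)$. For $x\in H(E,n)$, $x'\in H(E,n')$, $x\sim x'$ if there is $k\ge n,n'$ with $x\oplus e_{k-n}\sim_k x'\oplus e_{k-n'}$, where $e_j=\mathrm{diag}(e,\dots,e)$ and $\oplus$ is the block-diagonal sum. $\mathcal V(E)$ is the set of $\sim$-classes, a semigroup under $[x]+[x']=[x\oplus x']$ with identity $[e]$; $K_0(E)$ is its Grothendieck group. $\phi^{(n)}$ denotes the entrywise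 amplification. *)

theory Defs
  imports "HOL-Analysis.Analysis" "HOL-Algebra.Group" "Jordan_Normal_Form.Matrix"
begin

text \<open>The complex structure is
given by a central element iu with iu * iu = -1 (complex scalar x + i y acts as
multiplication by x *R 1 + y *R iu).\<close>

class cstar_algebra = real_normed_algebra_1 + banach +
  fixes adj :: "'a \<Rightarrow> 'a"
    and iu :: 'a
  assumes adj_add: "adj (a + b) = adj a + adj b"
    and adj_scaleR: "adj (r *\<^sub>R a) = r *\<^sub>R adj a"
    and adj_mult: "adj (a * b) = adj b * adj a"
    and adj_adj: "adj (adj a) = a"
    and iu_square: "iu * iu = - 1"
    and iu_central: "iu * a = a * iu"
    and adj_iu: "adj iu = - iu"
    and norm_complex_scalar:
      "norm ((x *\<^sub>R 1 + y *\<^sub>R iu) * a) = sqrt (x\<^sup>2 + y\<^sup>2) * norm a"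
    and cstar_identity: "norm (adj a * a) = (norm a)\<^sup>2"

definition mat_adj :: "'a::cstar_algebra mat \<Rightarrow> 'a mat" where
  "mat_adj X = mat (dim_col X) (dim_row X) (\<lambda>(i,j). adj (X $$ (j,i)))"

definition mat_entries :: "'a mat \<Rightarrow> 'a set" where
  "mat_entries X = {X $$ (i,j) | i j. i < dim_row X \<and> j < dim_col X}"

definition mat_pos :: "'a::cstar_algebra mat \<Rightarrow> bool" where
  "mat_pos X \<longleftrightarrow> (\<exists>Y \<in> carrier_mat (dim_row X) (dim_row X).
       square_mat X \<and> X = mat_adj Y * Y)"

definition dsum :: "'a::zero mat \<Rightarrow> 'a mat \<Rightarrow> 'a mat" (infixl "\<oplus>\<^sub>d" 65) where
  "X \<oplus>\<^sub>d Y = four_block_mat X (0\<^sub>m (dim_row X) (dim_col Y)) (0\<^sub>m (dim_row Y) (dim_col X)) Y"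

definition operator_system :: "'a::cstar_algebra set \<Rightarrow> bool" where
  "operator_system S \<longleftrightarrow> 1 \<in> S \<and> 0 \<in> S
     \<and> (\<forall>a\<in>S. \<forall>b\<in>S. a + b \<in> S)
     \<and> (\<forall>a\<in>S. \<forall>r::real. r *\<^sub>R a \<in> S)
     \<and> (\<forall>a\<in>S. iu * a \<in> S)
     \<and> (\<forall>a\<in>S. adj a \<in> S)"

definition cstar_generated :: "'a::cstar_algebra set \<Rightarrow> 'a set" where
  "cstar_generated S = \<Inter>{T. S \<subseteq> T \<and> closed T \<and> 1 \<in> T
       \<and> (\<forall>a\<in>T. \<forall>b\<in>T. a + b \<in> T \<and> a * b \<in> T)
       \<and> (\<forall>a\<in>T. \<forall>r::real. r *\<^sub>R a \<in> T)
       \<and> (\<forall>a\<in>T. iu * a \<in> T \<and> adj a \<in> T)}"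

definition closed_ideal :: "'a::cstar_algebra set \<Rightarrow> bool" where
  "closed_ideal J \<longleftrightarrow> closed J \<and> 0 \<in> J
     \<and> (\<forall>a\<in>J. \<forall>b\<in>J. a + b \<in> J)
     \<and> (\<forall>a\<in>J. \<forall>r::real. r *\<^sub>R a \<in> J)
     \<and> (\<forall>a\<in>J. \<forall>x. x * a \<in> J \<and> a * x \<in> J)"

text \<open>J is a boundary ideal for S: the quotient map A \<rightarrow> A/J is a complete order
embedding on S (equivalently, being unital, completely isometric on S).  Positivity
of the image of X in M_n(A/J) = M_n(A)/M_n(J) means X - Y* Y \<in> M_n(J) for some Y.\<close>
definition boundary_ideal :: "'a::cstar_algebra set \<Rightarrow> 'a set \<Rightarrow> bool" where
  "boundary_ideal S J \<longleftrightarrow> closed_ideal J \<and>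
     (\<forall>n. \<forall>X \<in> carrier_mat n n. mat_entries X \<subseteq> S \<and> mat_adj X = X \<and>
        (\<exists>Y \<in> carrier_mat n n. mat_entries (X - mat_adj Y * Y) \<subseteq> J) \<longrightarrow> mat_pos X)"

text \<open>A (with the inclusion of S) is the C*-envelope of the operator system S:
S generates A and the Shilov boundary ideal of S in A is zero.\<close>
definition is_cstar_envelope :: "'a::cstar_algebra set \<Rightarrow> bool" where
  "is_cstar_envelope S \<longleftrightarrow> operator_system S \<and> cstar_generated S = UNIV
     \<and> (\<forall>J. boundary_ideal S J \<longrightarrow> J = {0})"

definition star_hom :: "('a::cstar_algebra \<Rightarrow> 'b::cstar_algebra) \<Rightarrow> bool" where
  "star_hom f \<longleftrightarrow> (\<forall>a b. f (a + b) = f a + f b \<and> f (a * b) = f a * f b)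
     \<and> (\<forall>r a. f (r *\<^sub>R a) = r *\<^sub>R f a) \<and> (\<forall>a. f (iu * a) = iu * f a)
     \<and> (\<forall>a. f (adj a) = adj (f a))"

definition ucp_map :: "'a::cstar_algebra set \<Rightarrow> 'b::cstar_algebra set \<Rightarrow> ('a \<Rightarrow> 'b) \<Rightarrow> bool" where
  "ucp_map S T f \<longleftrightarrow> (\<forall>a\<in>S. f a \<in> T) \<and> f 1 = 1
     \<and> (\<forall>a\<in>S. \<forall>b\<in>S. f (a + b) = f a + f b)
     \<and> (\<forall>a\<in>S. \<forall>r. f (r *\<^sub>R a) = r *\<^sub>R f a) \<and> (\<forall>a\<in>S. f (iu * a) = iu * f a)
     \<and> (\<forall>n. \<forall>X \<in> carrier_mat n n. mat_entries X \<subseteq> S \<and> mat_pos X \<longrightarrow> mat_pos (map_mat f X))"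

text \<open>Hermitian forms in M_n(E) (E = S sitting inside its C*-envelope):
self-adjoint and invertible in M_n(C*_env(E)).\<close>
definition hermitian_form :: "'a::cstar_algebra set \<Rightarrow> nat \<Rightarrow> 'a mat \<Rightarrow> bool" where
  "hermitian_form S n X \<longleftrightarrow> X \<in> carrier_mat n n \<and> mat_entries X \<subseteq> S
     \<and> mat_adj X = X \<and> invertible_mat X"

definition herm_forms :: "'a::cstar_algebra set \<Rightarrow> 'a mat set" where
  "herm_forms S = {X. \<exists>n\<ge>1. hermitian_form S n X}"

text \<open>x \<sim>_n x': joined by a continuous path in H(E,n).  The topology of M_n(E) is the
entrywise one (all operator-system matrix norms are equivalent to it).\<close>
definition herm_homotopic :: "'a::cstar_algebra set \<Rightarrow> nat \<Rightarrow> 'a mat \<Rightarrow> 'a mat \<Rightarrow> bool" where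
  "herm_homotopic S n X X' \<longleftrightarrow> (\<exists>\<gamma>::real \<Rightarrow> 'a mat.
     (\<forall>t\<in>{0..1}. hermitian_form S n (\<gamma> t))
     \<and> (\<forall>i<n. \<forall>j<n. continuous_on {0..1} (\<lambda>t. \<gamma> t $$ (i,j)))
     \<and> \<gamma> 0 = X \<and> \<gamma> 1 = X')"

definition stable_rel :: "'a::cstar_algebra set \<Rightarrow> ('a mat \<times> 'a mat) set" where
  "stable_rel S = {(X, X'). X \<in> herm_forms S \<and> X' \<in> herm_forms S \<and>
     (\<exists>k. k \<ge> dim_row X \<and> k \<ge> dim_row X' \<and>
        herm_homotopic S k (X \<oplus>\<^sub>d 1\<^sub>m (k - dim_row X)) (X' \<oplus>\<^sub>d 1\<^sub>m (k - dim_row X')))}"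

definition V_class :: "'a::cstar_algebra set \<Rightarrow> 'a mat \<Rightarrow> 'a mat set" where
  "V_class S X = stable_rel S `` {X}"

definition V_monoid :: "'a::cstar_algebra set \<Rightarrow> 'a mat set monoid" where
  "V_monoid S = \<lparr> carrier = herm_forms S // stable_rel S,
     mult = (\<lambda>c d. V_class S ((SOME X. X \<in> c) \<oplus>\<^sub>d (SOME Y. Y \<in> d))),
     one = V_class S (1\<^sub>m 1) \<rparr>"

definition groth_rel :: "('m, 'x) monoid_scheme \<Rightarrow> (('m \<times> 'm) \<times> ('m \<times> 'm)) set" where
  "groth_rel M = {((a, b), (c, d)). a \<in> carrier M \<and> b \<in> carrier M \<and> c \<in> carrier M \<and> d \<in> carrier M
     \<and> (\<exists>k \<in> carrier M. a \<otimes>\<^bsub>M\<^esub> d \<otimes>\<^bsub>M\<^esub> k = c \<otimes>\<^bsub>M\<^esub> b \<otimes>\<^bsub>M\<^esub> k)}"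

definition groth_class :: "('m, 'x) monoid_scheme \<Rightarrow> 'm \<Rightarrow> 'm \<Rightarrow> ('m \<times> 'm) set" where
  "groth_class M a b = groth_rel M `` {(a, b)}"

definition groth_group :: "('m, 'x) monoid_scheme \<Rightarrow> ('m \<times> 'm) set monoid" where
  "groth_group M = \<lparr> carrier = (carrier M \<times> carrier M) // groth_rel M,
     mult = (\<lambda>p q. let (a, b) = (SOME x. x \<in> p); (c, d) = (SOME y. y \<in> q)
                   in groth_class M (a \<otimes>\<^bsub>M\<^esub> c) (b \<otimes>\<^bsub>M\<^esub> d)),
     one = groth_class M \<one>\<^bsub>M\<^esub> \<one>\<^bsub>M\<^esub> \<rparr>"

abbreviation K0 :: "'a::cstar_algebra set \<Rightarrow> ('a mat set \<times> 'a mat set) set monoid" where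
  "K0 S \<equiv> groth_group (V_monoid S)"

end

theory Submission
  imports Defs
begin

text \<open>The extension \<open>\<phi>t\<close> of \<open>\<phi>\<close> is a unital *-homomorphism, so applied entrywise it maps
  self-adjoint invertible matrices over \<open>E\<close> to self-adjoint invertible matrices over \<open>F\<close>, and it
  commutes with block sums and identity padding. It is also automatically bounded: for
  self-adjoint \<open>a\<close> with \<open>\<parallel>a\<parallel> < 1\<close>, \<open>\<phi>t a\<close> is the real part of the unitary
  \<open>\<phi>t a + i \<phi>t (sqrt (1 - a\<^sup>2))\<close>. Hence it maps paths of hermitian forms to paths, respects
  the stable relation and induces a monoid homomorphism \<open>\<V>(E) \<rightarrow> \<V>(F)\<close>. Because \<open>\<V>\<close> is
  commutative (a rotation path joins \<open>X \<oplus> Y\<close> to \<open>Y \<oplus> X\<close> once both are padded to equal size),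
  the Grothendieck construction is functorial on it, which gives \<open>K\<^sub>0(E) \<rightarrow> K\<^sub>0(F)\<close>.\<close>

section \<open>Automatic continuity of unital *-homomorphisms\<close>

lemma adj_zero [simp]: "adj (0::'a::cstar_algebra) = 0"
  using adj_scaleR[of 0 0] by simp

lemma adj_minus [simp]: "adj (- a) = - adj (a::'a::cstar_algebra)"
  using adj_scaleR[of "-1" a] by simp

lemma adj_diff [simp]: "adj (a - b) = adj a - adj (b::'a::cstar_algebra)"
  using adj_add[of a "- b"] by simp

lemma adj_one [simp]: "adj (1::'a::cstar_algebra) = 1"
  using adj_mult[of "adj 1" "1::'a"] by (simp add: adj_adj)

lemma adj_sum: "adj (sum f I) = (\<Sum>i\<in>I. adj (f i :: 'a::cstar_algebra))"
  by (induction I rule: infinite_finite_induct) (auto simp: adj_add)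

lemma adj_iu_mult: "adj (iu * a) = - (iu * adj (a::'a::cstar_algebra))"
  by (simp add: adj_mult adj_iu iu_central)

lemma norm_le_norm_adj: "norm a \<le> norm (adj (a::'a::cstar_algebra))"
proof (cases "a = 0")
  case False
  have "norm a * norm a = norm (adj a * a)"
    by (simp add: cstar_identity power2_eq_square)
  also have "\<dots> \<le> norm (adj a) * norm a"
    by (rule norm_mult_ineq)
  finally show ?thesis
    using False by simp
qed simp

lemma norm_adj [simp]: "norm (adj (a::'a::cstar_algebra)) = norm a"
  using norm_le_norm_adj[of a] norm_le_norm_adj[of "adj a"] by (simp add: adj_adj)

lemma bounded_linear_adj: "bounded_linear (adj :: 'a::cstar_algebra \<Rightarrow> 'a)"
  by (rule bounded_linear_intro[where K = 1]) (auto simp: adj_add adj_scaleR)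

lemma continuous_on_adj [continuous_intros]:
  "continuous_on T f \<Longrightarrow> continuous_on T (\<lambda>t. adj (f t :: 'a::cstar_algebra))"
  using bounded_linear.continuous_on[OF bounded_linear_adj] .

lemma norm_eq_1_if_adj_mult_eq_1:
  assumes "adj u * u = (1::'a::cstar_algebra)"
  shows "norm u = 1"
proof -
  have "(norm u)\<^sup>2 = 1"
    using cstar_identity[of u] assms by simp
  then show ?thesis
    using norm_ge_zero[of u] by (simp add: power2_eq_1_iff)
qed

text \<open>The element \<open>b + iu * t\<close> is unitary, and \<open>b\<close> is its real part.\<close>

lemma norm_le_1_if_squares_sum_1:
  fixes b :: "'a::cstar_algebra"
  assumes "adj b = b" "adj t = t" "b * t = t * b" "b * b + t * t = 1"
  shows "norm b \<le> 1"
proof -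
  define u where "u = b + iu * t"
  have adj_u: "adj u = b - iu * t"
    using assms(1,2) by (simp add: u_def adj_add adj_iu_mult)
  have "b * (iu * t) = (iu * t) * b"
    by (metis assms(3) iu_central mult.assoc)
  moreover have "(iu * t) * (iu * t) = - (t * t)"
    by (metis iu_central iu_square mult.assoc mult_minus1)
  ultimately have "adj u * u = b * b + t * t"
    unfolding adj_u unfolding u_def by (simp add: left_diff_distrib right_diff_distrib distrib_left)
  then have "norm u = 1"
    using assms(4) by (intro norm_eq_1_if_adj_mult_eq_1) simp
  have "2 *\<^sub>R b = u + adj u"
    unfolding adj_u unfolding u_def by (simp add: scaleR_2)
  then have "norm (2 *\<^sub>R b) \<le> norm u + norm (adj u)"
    by (metis norm_triangle_ineq)
  then show ?thesis
    using \<open>norm u = 1\<close> by simp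
qed

definition commutant :: "'a::times set \<Rightarrow> 'a set" where
  "commutant A = {y. \<forall>z\<in>A. y * z = z * y}"

lemma commutantI: "(\<And>z. z \<in> A \<Longrightarrow> y * z = z * y) \<Longrightarrow> y \<in> commutant A"
  and commutantD: "y \<in> commutant A \<Longrightarrow> z \<in> A \<Longrightarrow> y * z = z * y"
  unfolding commutant_def by auto

lemma commutant_add: "y \<in> commutant A \<Longrightarrow> w \<in> commutant A \<Longrightarrow> y + w \<in> commutant (A::'a::ring set)"
  by (auto intro!: commutantI dest!: commutantD simp: algebra_simps)

lemma commutant_mult: "y \<in> commutant A \<Longrightarrow> w \<in> commutant A \<Longrightarrow> y * w \<in> commutant (A::'a::ring set)"
  by (intro commutantI) (metis commutantD mult.assoc)

lemma commutant_scaleR: "y \<in> commutant A \<Longrightarrow> r *\<^sub>R y \<in> commutant (A::'a::real_algebra set)"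
  by (auto intro!: commutantI dest!: commutantD)

lemma subset_bicommutant: "A \<subseteq> commutant (commutant A)"
  by (auto intro!: commutantI dest: commutantD)

lemma bicommutant_commute:
  assumes "A \<subseteq> commutant A" "y \<in> commutant (commutant A)" "w \<in> commutant (commutant A)"
  shows "y * w = w * y"
proof -
  have "w \<in> commutant A"
    using assms(1,3) by (auto intro!: commutantI dest: commutantD)
  then show ?thesis
    using assms(2) commutantD by blast
qed

lemma closed_commutant: "closed (commutant (A::'a::real_normed_algebra set))"
proof -
  have "commutant A = (\<Inter>z\<in>A. {y. y * z = z * y})"
    by (auto simp: commutant_def)
  moreover have "closed {y. y * z = z * y}" for z :: 'a
    by (intro closed_Collect_eq continuous_intros)
  ultimately show ?thesis
    by auto
qed

lemma norm_square_diff_le: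
  fixes y w :: "'a::real_normed_algebra"
  assumes "y * w = w * y" "norm y \<le> r" "norm w \<le> r"
  shows "norm (y * y - w * w) \<le> 2 * r * norm (y - w)"
proof -
  have "y * y - w * w = (y - w) * (y + w)"
    using assms(1) by (simp add: algebra_simps)
  then have "norm (y * y - w * w) \<le> norm (y - w) * norm (y + w)"
    by (simp add: norm_mult_ineq)
  also have "\<dots> \<le> norm (y - w) * (2 * r)"
    using assms(2,3) norm_triangle_ineq[of y w] by (intro mult_left_mono) auto
  finally show ?thesis
    by (simp add: mult_ac)
qed

text \<open>The square root of \<open>1 - x\<close> is \<open>1 - y\<close>, where \<open>y\<close> is the fixed point of
  \<open>y \<mapsto> (x + y\<^sup>2)/2\<close>; this map contracts the ball of radius \<open>r = (1 + \<parallel>x\<parallel>)/2\<close> in the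
  self-adjoint part of the (commutative) bicommutant of \<open>x\<close>.\<close>

lemma sqrt_one_minus_exists:
  fixes x :: "'a::cstar_algebra"
  assumes adj_x: "adj x = x" and norm_x: "norm x < 1"
  shows "\<exists>s. adj s = s \<and> s * s = 1 - x \<and> s \<in> commutant (commutant {x})"
proof -
  define D where "D = commutant (commutant {x})"
  define r where "r = (1 + norm x) / 2"
  define S where "S = {y \<in> D. adj y = y \<and> norm y \<le> r}"
  define f where "f y = (1/2::real) *\<^sub>R (x + y * y)" for y
  have r: "0 \<le> r" "r < 1" "norm x \<le> r"
    using norm_x by (auto simp: r_def)
  have x_in_D: "x \<in> D"
    unfolding D_def using subset_bicommutant by blast
  have D_commute: "y \<in> D \<Longrightarrow> w \<in> D \<Longrightarrow> y * w = w * y" for y w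
    unfolding D_def by (rule bicommutant_commute) (auto intro: commutantI)
  have "closed S"
  proof -
    have "S = D \<inter> {y. adj y = y} \<inter> cball 0 r"
      by (auto simp: S_def)
    moreover have "closed {y::'a. adj y = y}"
      by (intro closed_Collect_eq continuous_intros continuous_on_id)
    ultimately show ?thesis
      unfolding D_def by (metis closed_Int closed_commutant closed_cball)
  qed
  have f_S: "f y \<in> S" if "y \<in> S" for y
  proof -
    have "norm (x + y * y) \<le> norm x + norm y * norm y"
      by (meson add_left_mono norm_mult_ineq norm_triangle_ineq order_trans)
    also have "\<dots> \<le> r + r * 1"
      using that r by (intro add_mono mult_mono) (auto simp: S_def)
    finally show ?thesis
      using that adj_x x_in_D
      by (auto simp: S_def f_def D_def adj_scaleR adj_add adj_mult
          intro!: commutant_scaleR commutant_add commutant_mult)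
  qed
  have f_contraction: "dist (f y) (f w) \<le> r * dist y w" if "y \<in> S" "w \<in> S" for y w
  proof -
    have "norm (y * y - w * w) \<le> 2 * r * norm (y - w)"
      using that D_commute by (intro norm_square_diff_le) (auto simp: S_def)
    moreover have "f y - f w = (1/2::real) *\<^sub>R (y * y - w * w)"
      by (simp add: f_def scaleR_right_diff_distrib scaleR_right_distrib)
    ultimately show ?thesis
      by (simp add: dist_norm)
  qed
  have "0 \<in> S"
    using r by (simp add: S_def D_def commutant_def)
  then obtain y where y: "y \<in> S" "f y = y"
    using Banach_fix[of S r f] \<open>closed S\<close> r f_S f_contraction
    by (auto simp: complete_eq_closed)
  have "y + y = x + y * y"
    using arg_cong[OF y(2), of "scaleR 2"] by (simp add: f_def scaleR_2)
  then have "(1 - y) * (1 - y) = 1 - x"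
    by (simp add: algebra_simps)
  moreover have "1 - y \<in> D"
    using y(1) unfolding S_def D_def
    by (auto intro!: commutantI dest: commutantD simp: algebra_simps)
  ultimately show ?thesis
    using y(1) by (intro exI[of _ "1 - y"]) (auto simp: S_def D_def)
qed

lemma star_hom_add: "star_hom f \<Longrightarrow> f (a + b) = f a + f b"
  and star_hom_mult: "star_hom f \<Longrightarrow> f (a * b) = f a * f b"
  and star_hom_scaleR: "star_hom f \<Longrightarrow> f (r *\<^sub>R a) = r *\<^sub>R f a"
  and star_hom_adj: "star_hom f \<Longrightarrow> f (adj a) = adj (f a)"
  unfolding star_hom_def by auto

lemma star_hom_zero: "star_hom f \<Longrightarrow> f 0 = 0"
  using star_hom_scaleR[of f 0 0] by simp

lemma norm_star_hom_le_1:
  fixes \<phi> :: "'a::cstar_algebra \<Rightarrow> 'b::cstar_algebra"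
  assumes hom: "star_hom \<phi>" and unital: "\<phi> 1 = 1" and adj_a: "adj a = a" and norm_a: "norm a < 1"
  shows "norm (\<phi> a) \<le> 1"
proof -
  have "norm (a * a) < 1"
    using norm_mult_ineq[of a a] norm_a mult_strict_mono'[OF norm_a norm_a] by simp
  moreover have "adj (a * a) = a * a"
    by (simp add: adj_mult adj_a)
  ultimately obtain s where s: "adj s = s" "s * s = 1 - a * a" "s \<in> commutant (commutant {a * a})"
    using sqrt_one_minus_exists by blast
  have "a \<in> commutant {a * a}"
    by (simp add: commutant_def mult.assoc)
  then have "s * a = a * s"
    using s(3) commutantD by blast
  show ?thesis
  proof (rule norm_le_1_if_squares_sum_1)
    show "adj (\<phi> a) = \<phi> a" "adj (\<phi> s) = \<phi> s"
      using adj_a s(1) star_hom_adj[OF hom] by metis+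
    show "\<phi> a * \<phi> s = \<phi> s * \<phi> a"
      using \<open>s * a = a * s\<close> star_hom_mult[OF hom] by metis
    have "a * a + s * s = 1"
      using s(2) by simp
    then show "\<phi> a * \<phi> a + \<phi> s * \<phi> s = 1"
      using unital by (metis star_hom_add[OF hom] star_hom_mult[OF hom])
  qed
qed

lemma norm_star_hom_selfadjoint_le:
  fixes \<phi> :: "'a::cstar_algebra \<Rightarrow> 'b::cstar_algebra"
  assumes hom: "star_hom \<phi>" and unital: "\<phi> 1 = 1" and adj_h: "adj h = h"
  shows "norm (\<phi> h) \<le> 2 * norm h"
proof (cases "h = 0")
  case True
  then show ?thesis
    using star_hom_zero[OF hom] by simp
next
  case False
  define c where "c = 1 / (2 * norm h)"
  have "c > 0"
    using False by (simp add: c_def)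
  have "norm (\<phi> (c *\<^sub>R h)) \<le> 1"
    using False adj_h by (intro norm_star_hom_le_1[OF hom unital]) (simp_all add: c_def adj_scaleR)
  then have "c * norm (\<phi> h) \<le> 1"
    using \<open>c > 0\<close> by (simp add: star_hom_scaleR[OF hom])
  then show ?thesis
    using False by (simp add: c_def field_simps)
qed

lemma bounded_linear_star_hom:
  fixes \<phi> :: "'a::cstar_algebra \<Rightarrow> 'b::cstar_algebra"
  assumes hom: "star_hom \<phi>" and unital: "\<phi> 1 = 1"
  shows "bounded_linear \<phi>"
proof (rule bounded_linear_intro[where K = 2])
  show "\<phi> (x + y) = \<phi> x + \<phi> y" "\<phi> (r *\<^sub>R x) = r *\<^sub>R \<phi> x" for x y r
    by (simp_all add: star_hom_add[OF hom] star_hom_scaleR[OF hom])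
  fix a :: 'a
  have "(norm (\<phi> a))\<^sup>2 = norm (\<phi> (adj a * a))"
    by (simp add: cstar_identity star_hom_mult[OF hom] star_hom_adj[OF hom])
  also have "\<dots> \<le> 2 * (norm a)\<^sup>2"
    using norm_star_hom_selfadjoint_le[OF hom unital, of "adj a * a"]
    by (simp add: adj_mult adj_adj cstar_identity)
  also have "\<dots> \<le> (norm a * 2)\<^sup>2"
    by (simp add: power2_eq_square)
  finally show "norm (\<phi> a) \<le> norm a * 2"
    by (rule power2_le_imp_le) simp
qed

section \<open>Matrices over a C*-algebra\<close>

lemma operator_system_zero: "operator_system S \<Longrightarrow> 0 \<in> S"
  and operator_system_one: "operator_system S \<Longrightarrow> 1 \<in> S"
  and operator_system_add: "operator_system S \<Longrightarrow> a \<in> S \<Longrightarrow> b \<in> S \<Longrightarrow> a + b \<in> S"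
  and operator_system_scaleR: "operator_system S \<Longrightarrow> a \<in> S \<Longrightarrow> r *\<^sub>R a \<in> S"
  unfolding operator_system_def by auto

lemma mat_entries_subset_iff:
  "mat_entries X \<subseteq> S \<longleftrightarrow> (\<forall>i<dim_row X. \<forall>j<dim_col X. X $$ (i, j) \<in> S)"
  unfolding mat_entries_def by auto

lemma mat_adj_dim [simp]: "dim_row (mat_adj X) = dim_col X" "dim_col (mat_adj X) = dim_row X"
  by (auto simp: mat_adj_def)

lemma mat_adj_index [simp]:
  "i < dim_col X \<Longrightarrow> j < dim_row X \<Longrightarrow> mat_adj X $$ (i, j) = adj (X $$ (j, i))"
  by (auto simp: mat_adj_def)

lemma mat_adj_mult:
  fixes A :: "'a::cstar_algebra mat"
  assumes A: "A \<in> carrier_mat n k" and B: "B \<in> carrier_mat k m"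
  shows "mat_adj (A * B) = mat_adj B * mat_adj A"
proof (rule eq_matI)
  fix i j assume "i < dim_row (mat_adj B * mat_adj A)" "j < dim_col (mat_adj B * mat_adj A)"
  then have "i < m" "j < n"
    using A B by auto
  then show "mat_adj (A * B) $$ (i, j) = (mat_adj B * mat_adj A) $$ (i, j)"
    using A B by (simp add: scalar_prod_def adj_sum adj_mult)
qed (use A B in auto)

lemma mat_adj_one [simp]: "mat_adj (1\<^sub>m n :: 'a::cstar_algebra mat) = 1\<^sub>m n"
  by (rule eq_matI) auto

lemma mat_adj_four_block_mat:
  fixes A :: "'a::cstar_algebra mat"
  assumes "A \<in> carrier_mat n1 m1" "B \<in> carrier_mat n1 m2" "C \<in> carrier_mat n2 m1" "D \<in> carrier_mat n2 m2"
  shows "mat_adj (four_block_mat A B C D) = four_block_mat (mat_adj A) (mat_adj C) (mat_adj B) (mat_adj D)"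
  by (rule eq_matI) (use assms in auto)

lemma dsum_dim [simp]:
  "dim_row (X \<oplus>\<^sub>d Y) = dim_row X + dim_row Y" "dim_col (X \<oplus>\<^sub>d Y) = dim_col X + dim_col Y"
  by (auto simp: dsum_def)

lemma dsum_carrier [simp, intro]:
  "X \<in> carrier_mat n1 m1 \<Longrightarrow> Y \<in> carrier_mat n2 m2 \<Longrightarrow> X \<oplus>\<^sub>d Y \<in> carrier_mat (n1 + n2) (m1 + m2)"
  by (intro carrier_matI) (auto dest: carrier_matD)

lemma dsum_index:
  "i < dim_row X + dim_row Y \<Longrightarrow> j < dim_col X + dim_col Y \<Longrightarrow> (X \<oplus>\<^sub>d Y) $$ (i, j) =
    (if i < dim_row X then if j < dim_col X then X $$ (i, j) else 0
     else if j < dim_col X then 0 else Y $$ (i - dim_row X, j - dim_col X))"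
  by (auto simp: dsum_def)

lemma dsum_index_blocks:
  "i < dim_row X \<Longrightarrow> j < dim_col X \<Longrightarrow> (X \<oplus>\<^sub>d Y) $$ (i, j) = X $$ (i, j)"
  "i < dim_row X \<Longrightarrow> dim_col X \<le> j \<Longrightarrow> j < dim_col X + dim_col Y \<Longrightarrow> (X \<oplus>\<^sub>d Y) $$ (i, j) = 0"
  "dim_row X \<le> i \<Longrightarrow> i < dim_row X + dim_row Y \<Longrightarrow> j < dim_col X \<Longrightarrow> (X \<oplus>\<^sub>d Y) $$ (i, j) = 0"
  "dim_row X \<le> i \<Longrightarrow> i < dim_row X + dim_row Y \<Longrightarrow> dim_col X \<le> j \<Longrightarrow> j < dim_col X + dim_col Y \<Longrightarrow>
     (X \<oplus>\<^sub>d Y) $$ (i, j) = Y $$ (i - dim_row X, j - dim_col X)"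
  by (simp_all add: dsum_index)

lemma dsum_assoc: "(X \<oplus>\<^sub>d Y) \<oplus>\<^sub>d Z = X \<oplus>\<^sub>d (Y \<oplus>\<^sub>d Z)"
proof (rule eq_matI)
  fix i j assume "i < dim_row (X \<oplus>\<^sub>d (Y \<oplus>\<^sub>d Z))" "j < dim_col (X \<oplus>\<^sub>d (Y \<oplus>\<^sub>d Z))"
  then show "((X \<oplus>\<^sub>d Y) \<oplus>\<^sub>d Z) $$ (i, j) = (X \<oplus>\<^sub>d (Y \<oplus>\<^sub>d Z)) $$ (i, j)"
    by (cases "i < dim_row X"; cases "i < dim_row X + dim_row Y";
        cases "j < dim_col X"; cases "j < dim_col X + dim_col Y") (simp_all add: dsum_index_blocks)
qed auto

lemma dsum_one_mat: "1\<^sub>m a \<oplus>\<^sub>d 1\<^sub>m b = 1\<^sub>m (a + b)"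
  unfolding dsum_def by simp

lemma dsum_one_mat_0 [simp]: "X \<oplus>\<^sub>d 1\<^sub>m 0 = X"
  by (rule eq_matI) (simp_all add: dsum_index_blocks)

lemma mat_adj_dsum: "mat_adj (X \<oplus>\<^sub>d Y) = mat_adj X \<oplus>\<^sub>d mat_adj (Y :: 'a::cstar_algebra mat)"
proof (rule eq_matI)
  fix i j assume "i < dim_row (mat_adj X \<oplus>\<^sub>d mat_adj Y)" "j < dim_col (mat_adj X \<oplus>\<^sub>d mat_adj Y)"
  then show "mat_adj (X \<oplus>\<^sub>d Y) $$ (i, j) = (mat_adj X \<oplus>\<^sub>d mat_adj Y) $$ (i, j)"
    by (cases "i < dim_col X"; cases "j < dim_row X") (simp_all add: dsum_index_blocks)
qed auto

lemma map_mat_dsum: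
  assumes "f 0 = 0"
  shows "map_mat f (X \<oplus>\<^sub>d Y) = map_mat f X \<oplus>\<^sub>d map_mat f Y"
proof (rule eq_matI)
  fix i j assume "i < dim_row (map_mat f X \<oplus>\<^sub>d map_mat f Y)" "j < dim_col (map_mat f X \<oplus>\<^sub>d map_mat f Y)"
  then show "map_mat f (X \<oplus>\<^sub>d Y) $$ (i, j) = (map_mat f X \<oplus>\<^sub>d map_mat f Y) $$ (i, j)"
    using assms by (cases "i < dim_row X"; cases "j < dim_col X") (simp_all add: dsum_index_blocks)
qed auto

lemma mult_dsum:
  fixes X :: "'a::semiring_1 mat"
  assumes "X \<in> carrier_mat n1 m1" "X' \<in> carrier_mat m1 k1" "Y \<in> carrier_mat n2 m2" "Y' \<in> carrier_mat m2 k2"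
  shows "(X \<oplus>\<^sub>d Y) * (X' \<oplus>\<^sub>d Y') = (X * X') \<oplus>\<^sub>d (Y * Y')"
  unfolding dsum_def by (subst mult_four_block_mat[of _ n1 m1 _ m2 _ n2]) (use assms in auto)

lemma invertible_matE:
  fixes A :: "'a::semiring_1 mat"
  assumes "invertible_mat A" "A \<in> carrier_mat n n"
  obtains B where "B \<in> carrier_mat n n" "A * B = 1\<^sub>m n" "B * A = 1\<^sub>m n"
proof -
  obtain B where AB: "A * B = 1\<^sub>m n" and BA: "B * A = 1\<^sub>m (dim_row B)"
    using assms unfolding invertible_mat_def inverts_mat_def by auto
  have "dim_col B = n"
    using AB by (metis index_mult_mat(3) index_one_mat(3))
  moreover have "dim_row B = n"
    using BA assms(2) by (metis carrier_matD(2) index_mult_mat(3) index_one_mat(3))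
  ultimately show ?thesis
    using AB BA that by auto
qed

lemma invertible_matI:
  fixes A :: "'a::semiring_1 mat"
  assumes "A \<in> carrier_mat n n" "B \<in> carrier_mat n n" "A * B = 1\<^sub>m n" "B * A = 1\<^sub>m n"
  shows "invertible_mat A"
  using assms unfolding invertible_mat_def inverts_mat_def by auto

lemma invertible_mat_one: "invertible_mat (1\<^sub>m n :: 'a::semiring_1 mat)"
  by (rule invertible_matI[of _ n "1\<^sub>m n"]) auto

lemma invertible_mat_dsum:
  fixes X :: "'a::semiring_1 mat"
  assumes "invertible_mat X" "X \<in> carrier_mat n n" "invertible_mat Y" "Y \<in> carrier_mat m m"
  shows "invertible_mat (X \<oplus>\<^sub>d Y)"
proof -
  obtain X' where "X' \<in> carrier_mat n n" "X * X' = 1\<^sub>m n" "X' * X = 1\<^sub>m n"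
    using invertible_matE[OF assms(1,2)] .
  moreover obtain Y' where "Y' \<in> carrier_mat m m" "Y * Y' = 1\<^sub>m m" "Y' * Y = 1\<^sub>m m"
    using invertible_matE[OF assms(3,4)] .
  ultimately show ?thesis
    using assms by (intro invertible_matI[of _ "n + m" "X' \<oplus>\<^sub>d Y'"]) (auto simp: mult_dsum dsum_one_mat)
qed

lemma invertible_mat_mult:
  fixes A :: "'a::semiring_1 mat"
  assumes A: "invertible_mat A" "A \<in> carrier_mat n n" and B: "invertible_mat B" "B \<in> carrier_mat n n"
  shows "invertible_mat (A * B)"
proof -
  obtain A' where A': "A' \<in> carrier_mat n n" "A * A' = 1\<^sub>m n" "A' * A = 1\<^sub>m n"
    using invertible_matE[OF A] .
  obtain B' where B': "B' \<in> carrier_mat n n" "B * B' = 1\<^sub>m n" "B' * B = 1\<^sub>m n"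
    using invertible_matE[OF B] .
  have "(A * B) * (B' * A') = A * (B * (B' * A'))"
    by (rule assoc_mult_mat) (use A B A' B' in auto)
  also have "B * (B' * A') = (B * B') * A'"
    by (rule assoc_mult_mat[symmetric]) (use B A' B' in auto)
  finally have AB: "(A * B) * (B' * A') = 1\<^sub>m n"
    using A A' B' by simp
  have "(B' * A') * (A * B) = B' * (A' * (A * B))"
    by (rule assoc_mult_mat) (use A B A' B' in auto)
  also have "A' * (A * B) = (A' * A) * B"
    by (rule assoc_mult_mat[symmetric]) (use A B A' in auto)
  finally have BA: "(B' * A') * (A * B) = 1\<^sub>m n"
    using B A' B' by simp
  show ?thesis
    using A B A' B' AB BA by (intro invertible_matI[of _ n "B' * A'"]) auto
qed

lemma invertible_mat_map_mat:
  assumes hom: "semiring_hom f" and A: "invertible_mat A" "A \<in> carrier_mat n n"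
  shows "invertible_mat (map_mat f A)"
proof -
  obtain B where B: "B \<in> carrier_mat n n" "A * B = 1\<^sub>m n" "B * A = 1\<^sub>m n"
    using invertible_matE[OF A] .
  have "map_mat f A * map_mat f B = 1\<^sub>m n" "map_mat f B * map_mat f A = 1\<^sub>m n"
    using semiring_hom.mat_hom_mult[OF hom] semiring_hom.mat_hom_one[OF hom] A(2) B by metis+
  then show ?thesis
    using A(2) B(1) by (intro invertible_matI[of _ n "map_mat f B"]) auto
qed

section \<open>Hermitian forms and their homotopies\<close>

lemma hermitian_form_carrier: "hermitian_form S n X \<Longrightarrow> X \<in> carrier_mat n n"
  and hermitian_form_entry: "hermitian_form S n X \<Longrightarrow> i < n \<Longrightarrow> j < n \<Longrightarrow> X $$ (i, j) \<in> S"
  unfolding hermitian_form_def mat_entries_subset_iff by auto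

lemma hermitian_form_dsum:
  assumes S: "operator_system S" and X: "hermitian_form S n X" and Y: "hermitian_form S m Y"
  shows "hermitian_form S (n + m) (X \<oplus>\<^sub>d Y)"
proof -
  have "X \<in> carrier_mat n n" "Y \<in> carrier_mat m m"
    using X Y by (auto simp: hermitian_form_def)
  then have "(X \<oplus>\<^sub>d Y) $$ (i, j) \<in> S" if "i < n + m" "j < n + m" for i j
    using that hermitian_form_entry[OF X] hermitian_form_entry[OF Y] operator_system_zero[OF S]
    by (cases "i < n"; cases "j < n") (simp_all add: dsum_index_blocks)
  then have "mat_entries (X \<oplus>\<^sub>d Y) \<subseteq> S"
    using X Y by (auto simp: mat_entries_subset_iff hermitian_form_def)
  then show ?thesis
    using X Y by (auto simp: hermitian_form_def mat_adj_dsum intro: invertible_mat_dsum)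
qed

lemma hermitian_form_one: "operator_system S \<Longrightarrow> hermitian_form S n (1\<^sub>m n)"
  unfolding hermitian_form_def mat_entries_subset_iff
  by (auto simp: operator_system_zero operator_system_one invertible_mat_one)

lemma herm_formsI: "hermitian_form S n X \<Longrightarrow> 1 \<le> n \<Longrightarrow> X \<in> herm_forms S"
  unfolding herm_forms_def by auto

lemma herm_formsD: "X \<in> herm_forms S \<Longrightarrow> hermitian_form S (dim_row X) X"
  and herm_forms_dim_ge_1: "X \<in> herm_forms S \<Longrightarrow> 1 \<le> dim_row X"
  unfolding herm_forms_def using hermitian_form_carrier by fastforce+

lemma herm_forms_dsum:
  "operator_system S \<Longrightarrow> X \<in> herm_forms S \<Longrightarrow> Y \<in> herm_forms S \<Longrightarrow> X \<oplus>\<^sub>d Y \<in> herm_forms S"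
  using hermitian_form_dsum herm_formsD herm_forms_dim_ge_1
  by (metis herm_formsI dsum_dim(1) le_add1 order_trans)

lemma one_in_herm_forms: "operator_system S \<Longrightarrow> 1\<^sub>m 1 \<in> herm_forms S"
  by (intro herm_formsI[of _ 1] hermitian_form_one) auto

lemma herm_homotopic_refl: "hermitian_form S k X \<Longrightarrow> herm_homotopic S k X X"
  unfolding herm_homotopic_def by (intro exI[of _ "\<lambda>t. X"]) auto

lemma herm_homotopic_sym:
  fixes S :: "'a::cstar_algebra set"
  assumes "herm_homotopic S k X Y"
  shows "herm_homotopic S k Y X"
proof -
  obtain g :: "real \<Rightarrow> 'a mat" where g: "\<forall>t\<in>{0..1}. hermitian_form S k (g t)"
    "\<forall>i<k. \<forall>j<k. continuous_on {0..1} (\<lambda>t. g t $$ (i, j))" "g 0 = X" "g 1 = Y"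
    using assms unfolding herm_homotopic_def by blast
  have "continuous_on {0..1} (\<lambda>t. g (1 - t) $$ (i, j))" if "i < k" "j < k" for i j
    by (rule continuous_on_compose2[OF g(2)[rule_format, OF that]]) (auto intro!: continuous_intros)
  moreover have "hermitian_form S k (g (1 - t))" if "t \<in> {0..1}" for t
    using g(1) that by simp
  ultimately show ?thesis
    unfolding herm_homotopic_def using g(3,4) by (intro exI[of _ "\<lambda>t. g (1 - t)"]) auto
qed

lemma herm_homotopic_trans:
  fixes S :: "'a::cstar_algebra set"
  assumes "herm_homotopic S k X Y" "herm_homotopic S k Y Z"
  shows "herm_homotopic S k X Z"
proof -
  obtain g :: "real \<Rightarrow> 'a mat" where g: "\<forall>t\<in>{0..1}. hermitian_form S k (g t)"
    "\<forall>i<k. \<forall>j<k. continuous_on {0..1} (\<lambda>t. g t $$ (i, j))" "g 0 = X" "g 1 = Y"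
    using assms(1) unfolding herm_homotopic_def by blast
  obtain h :: "real \<Rightarrow> 'a mat" where h: "\<forall>t\<in>{0..1}. hermitian_form S k (h t)"
    "\<forall>i<k. \<forall>j<k. continuous_on {0..1} (\<lambda>t. h t $$ (i, j))" "h 0 = Y" "h 1 = Z"
    using assms(2) unfolding herm_homotopic_def by blast
  define p where "p t = (if t \<le> 1/2 then g (2 * t) else h (2 * t - 1))" for t
  have "continuous_on {0..1} (\<lambda>t. p t $$ (i, j))" if "i < k" "j < k" for i j
  proof -
    have p_entry: "(\<lambda>t. p t $$ (i, j)) = (\<lambda>t. if t \<le> 1/2 then g (2 * t) $$ (i, j) else h (2 * t - 1) $$ (i, j))"
      by (auto simp: p_def)
    show ?thesis
      unfolding p_entry
    proof (rule continuous_on_cases_1)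
      show "continuous_on {t \<in> {0..1}. t \<le> 1/2} (\<lambda>t. g (2 * t) $$ (i, j))"
        by (rule continuous_on_compose2[OF g(2)[rule_format, OF that]]) (auto intro!: continuous_intros)
      show "continuous_on {t \<in> {0..1}. 1/2 \<le> t} (\<lambda>t. h (2 * t - 1) $$ (i, j))"
        by (rule continuous_on_compose2[OF h(2)[rule_format, OF that]]) (auto intro!: continuous_intros)
      show "g (2 * (1/2)) $$ (i, j) = h (2 * (1/2) - 1) $$ (i, j)"
        using g(4) h(3) by simp
    qed
  qed
  moreover have "hermitian_form S k (p t)" if "t \<in> {0..1}" for t
    using g(1) h(1) that by (auto simp: p_def)
  ultimately show ?thesis
    unfolding herm_homotopic_def using g(3) h(4) by (intro exI[of _ p]) (auto simp: p_def)
qed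

lemma herm_homotopic_dsum:
  fixes S :: "'a::cstar_algebra set"
  assumes S: "operator_system S" and "herm_homotopic S m X X'" "herm_homotopic S n Y Y'"
  shows "herm_homotopic S (m + n) (X \<oplus>\<^sub>d Y) (X' \<oplus>\<^sub>d Y')"
proof -
  obtain g :: "real \<Rightarrow> 'a mat" where g: "\<forall>t\<in>{0..1}. hermitian_form S m (g t)"
    "\<forall>i<m. \<forall>j<m. continuous_on {0..1} (\<lambda>t. g t $$ (i, j))" "g 0 = X" "g 1 = X'"
    using assms(2) unfolding herm_homotopic_def by blast
  obtain h :: "real \<Rightarrow> 'a mat" where h: "\<forall>t\<in>{0..1}. hermitian_form S n (h t)"
    "\<forall>i<n. \<forall>j<n. continuous_on {0..1} (\<lambda>t. h t $$ (i, j))" "h 0 = Y" "h 1 = Y'"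
    using assms(3) unfolding herm_homotopic_def by blast
  have "continuous_on {0..1} (\<lambda>t. (g t \<oplus>\<^sub>d h t) $$ (i, j))" if ij: "i < m + n" "j < m + n" for i j
  proof (rule continuous_on_cong[THEN iffD1, OF refl])
    show "continuous_on {0..1} (\<lambda>t. if i < m then if j < m then g t $$ (i, j) else 0
        else if j < m then 0 else h t $$ (i - m, j - m))"
      using g(2) h(2) ij by (cases "i < m"; cases "j < m") simp_all
    fix t :: real assume "t \<in> {0..1}"
    then have "g t \<in> carrier_mat m m" "h t \<in> carrier_mat n n"
      using g(1) h(1) hermitian_form_carrier by blast+
    then show "(if i < m then if j < m then g t $$ (i, j) else 0
        else if j < m then 0 else h t $$ (i - m, j - m)) = (g t \<oplus>\<^sub>d h t) $$ (i, j)"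
      using ij by (simp add: dsum_index)
  qed
  then show ?thesis
    unfolding herm_homotopic_def using g h hermitian_form_dsum[OF S]
    by (intro exI[of _ "\<lambda>t. g t \<oplus>\<^sub>d h t"]) auto
qed

section \<open>The rotation homotopy from \<open>X \<oplus> Y\<close> to \<open>Y \<oplus> X\<close>\<close>

definition scalar_mat :: "nat \<Rightarrow> real \<Rightarrow> 'a::cstar_algebra mat" where
  "scalar_mat m r = map_mat (scaleR r) (1\<^sub>m m)"

definition rotation_mat :: "nat \<Rightarrow> real \<Rightarrow> real \<Rightarrow> 'a::cstar_algebra mat" where
  "rotation_mat m c s = four_block_mat (scalar_mat m c) (scalar_mat m (- s)) (scalar_mat m s) (scalar_mat m c)"

lemma scalar_mat_carrier [simp]: "scalar_mat m r \<in> carrier_mat m m"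
  by (simp add: scalar_mat_def)

lemma scalar_mat_dim [simp]: "dim_row (scalar_mat m r) = m" "dim_col (scalar_mat m r) = m"
  by (simp_all add: scalar_mat_def)

lemma scalar_mat_index [simp]: "i < m \<Longrightarrow> j < m \<Longrightarrow> scalar_mat m r $$ (i, j) = (if i = j then r *\<^sub>R 1 else 0)"
  by (simp add: scalar_mat_def)

lemma scalar_mat_mult_left:
  assumes A: "A \<in> carrier_mat m n"
  shows "scalar_mat m r * A = map_mat (scaleR r) A"
proof (rule eq_matI)
  fix i j assume "i < dim_row (map_mat (scaleR r) A)" "j < dim_col (map_mat (scaleR r) A)"
  then have ij: "i < m" "j < n"
    using A by auto
  have "(scalar_mat m r * A) $$ (i, j) = (\<Sum>l\<in>{0..<m}. (if i = l then r *\<^sub>R 1 else 0) * A $$ (l, j))"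
    using A ij by (simp add: scalar_prod_def)
  also have "\<dots> = (\<Sum>l\<in>{0..<m}. if i = l then r *\<^sub>R A $$ (l, j) else 0)"
    by (intro sum.cong) auto
  finally have "(scalar_mat m r * A) $$ (i, j) = r *\<^sub>R A $$ (i, j)"
    using ij by simp
  then show "(scalar_mat m r * A) $$ (i, j) = map_mat (scaleR r) A $$ (i, j)"
    using A ij by simp
qed (use A in auto)

lemma scalar_mat_mult_right:
  assumes A: "A \<in> carrier_mat n m"
  shows "A * scalar_mat m r = map_mat (scaleR r) A"
proof (rule eq_matI)
  fix i j assume "i < dim_row (map_mat (scaleR r) A)" "j < dim_col (map_mat (scaleR r) A)"
  then have ij: "i < n" "j < m"
    using A by auto
  have "(A * scalar_mat m r) $$ (i, j) = (\<Sum>l\<in>{0..<m}. A $$ (i, l) * (if l = j then r *\<^sub>R 1 else 0))"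
    using A ij by (simp add: scalar_prod_def)
  also have "\<dots> = (\<Sum>l\<in>{0..<m}. if l = j then r *\<^sub>R A $$ (i, l) else 0)"
    by (intro sum.cong) auto
  finally have "(A * scalar_mat m r) $$ (i, j) = r *\<^sub>R A $$ (i, j)"
    using ij by simp
  then show "(A * scalar_mat m r) $$ (i, j) = map_mat (scaleR r) A $$ (i, j)"
    using A ij by simp
qed (use A in auto)

lemma scalar_mat_mult: "scalar_mat m a * scalar_mat m b = (scalar_mat m (a * b) :: 'a::cstar_algebra mat)"
  unfolding scalar_mat_mult_left[OF scalar_mat_carrier] by (rule eq_matI) auto

lemma scalar_mat_add: "scalar_mat m a + scalar_mat m b = (scalar_mat m (a + b) :: 'a::cstar_algebra mat)"
  by (rule eq_matI) (auto simp: scaleR_left_distrib)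

lemma scalar_mat_1: "scalar_mat m 1 = 1\<^sub>m m"
  and scalar_mat_0: "scalar_mat m 0 = 0\<^sub>m m m"
  by (rule eq_matI; auto)+

lemma mat_adj_scalar_mat [simp]: "mat_adj (scalar_mat m r) = scalar_mat m r"
  by (rule eq_matI) (auto simp: adj_scaleR)

lemma rotation_mat_carrier [simp]: "rotation_mat m c s \<in> carrier_mat (m + m) (m + m)"
  by (simp add: rotation_mat_def)

lemma mat_adj_rotation_mat: "mat_adj (rotation_mat m c s) = rotation_mat m c (- s)"
  unfolding rotation_mat_def by (subst mat_adj_four_block_mat[of _ m m]) auto

lemma rotation_mat_mult_inverse:
  assumes "s * s + c * c = 1"
  shows "rotation_mat m c s * rotation_mat m c (- s) = (1\<^sub>m (m + m) :: 'a::cstar_algebra mat)"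
proof -
  have coeffs: "c * c + (- s) * (- s) = 1" "c * s + (- s) * c = 0" "s * c + c * (- s) = 0"
    using assms by (auto simp: algebra_simps)
  have "rotation_mat m c s * rotation_mat m c (- s) = four_block_mat
      (scalar_mat m c * scalar_mat m c + scalar_mat m (- s) * scalar_mat m (- s))
      (scalar_mat m c * scalar_mat m s + scalar_mat m (- s) * scalar_mat m c)
      (scalar_mat m s * scalar_mat m c + scalar_mat m c * scalar_mat m (- s))
      (scalar_mat m s * scalar_mat m s + (scalar_mat m c * scalar_mat m c :: 'a mat))"
    unfolding rotation_mat_def by (subst mult_four_block_mat[of _ m m _ m _ m]) auto
  also have "\<dots> = four_block_mat (scalar_mat m (c * c + (- s) * (- s))) (scalar_mat m (c * s + (- s) * c))
      (scalar_mat m (s * c + c * (- s))) (scalar_mat m (s * s + c * c))"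
    by (simp only: scalar_mat_mult scalar_mat_add)
  also have "\<dots> = 1\<^sub>m (m + m)"
    by (simp only: coeffs assms scalar_mat_1 scalar_mat_0 four_block_one_mat)
  finally show ?thesis .
qed

lemma invertible_rotation_mat:
  assumes "s * s + c * c = 1"
  shows "invertible_mat (rotation_mat m c s :: 'a::cstar_algebra mat)"
  using assms rotation_mat_mult_inverse[of s c m] rotation_mat_mult_inverse[of "- s" c m]
  by (intro invertible_matI[of _ "m + m" "rotation_mat m c (- s)"]) auto

lemma rotation_mat_conj:
  assumes "Z1 \<in> carrier_mat m m" "Z2 \<in> carrier_mat m m"
  shows "rotation_mat m c s * (Z1 \<oplus>\<^sub>d Z2) * rotation_mat m c (- s) = four_block_mat
      (map_mat (scaleR (c * c)) Z1 + map_mat (scaleR (s * s)) Z2)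
      (map_mat (scaleR (c * s)) Z1 + map_mat (scaleR (- (c * s))) Z2)
      (map_mat (scaleR (c * s)) Z1 + map_mat (scaleR (- (c * s))) Z2)
      (map_mat (scaleR (s * s)) Z1 + map_mat (scaleR (c * c)) Z2)"
  unfolding rotation_mat_def dsum_def
  apply (subst mult_four_block_mat[of _ m m _ m _ m])
  apply (use assms in auto)
  apply (subst mult_four_block_mat[of _ m m _ m _ m])
  apply (use assms in \<open>auto simp: scalar_mat_mult_left\<close>)
  apply (simp_all add: scalar_mat_mult_left scalar_mat_mult_right)
  apply (rule eq_matI)
  apply (use assms in \<open>auto simp: scaleR_scaleR algebra_simps\<close>)
  done

lemma rotation_mat_conj_index:
  assumes "Z1 \<in> carrier_mat m m" "Z2 \<in> carrier_mat m m" "i < m + m" "j < m + m"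
  shows "(rotation_mat m c s * (Z1 \<oplus>\<^sub>d Z2) * rotation_mat m c (- s)) $$ (i, j) =
    (if i < m then
       if j < m then (c * c) *\<^sub>R Z1 $$ (i, j) + (s * s) *\<^sub>R Z2 $$ (i, j)
       else (c * s) *\<^sub>R Z1 $$ (i, j - m) - (c * s) *\<^sub>R Z2 $$ (i, j - m)
     else
       if j < m then (c * s) *\<^sub>R Z1 $$ (i - m, j) - (c * s) *\<^sub>R Z2 $$ (i - m, j)
       else (s * s) *\<^sub>R Z1 $$ (i - m, j - m) + (c * c) *\<^sub>R Z2 $$ (i - m, j - m))"
  using assms by (simp add: rotation_mat_conj)

lemma operator_system_diff: "operator_system S \<Longrightarrow> a \<in> S \<Longrightarrow> b \<in> S \<Longrightarrow> a - b \<in> S"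
  using operator_system_add operator_system_scaleR[of S b "-1"] by fastforce

lemma hermitian_form_rotation_conj:
  fixes S :: "'a::cstar_algebra set"
  assumes S: "operator_system S" and Z1: "hermitian_form S m Z1" and Z2: "hermitian_form S m Z2"
    and cs: "s * s + c * c = 1"
  shows "hermitian_form S (m + m) (rotation_mat m c s * (Z1 \<oplus>\<^sub>d Z2) * rotation_mat m c (- s))"
proof -
  let ?R = "rotation_mat m c s :: 'a mat" and ?R' = "rotation_mat m c (- s) :: 'a mat"
  have Z: "hermitian_form S (m + m) (Z1 \<oplus>\<^sub>d Z2)"
    by (rule hermitian_form_dsum[OF S Z1 Z2])
  then have Z_carrier: "Z1 \<oplus>\<^sub>d Z2 \<in> carrier_mat (m + m) (m + m)"
    by (rule hermitian_form_carrier)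
  have RZ: "?R * (Z1 \<oplus>\<^sub>d Z2) \<in> carrier_mat (m + m) (m + m)"
    using Z_carrier by (rule mult_carrier_mat[OF rotation_mat_carrier])
  have "mat_adj (?R * (Z1 \<oplus>\<^sub>d Z2) * ?R') = mat_adj ?R' * mat_adj (?R * (Z1 \<oplus>\<^sub>d Z2))"
    by (rule mat_adj_mult[OF RZ rotation_mat_carrier])
  also have "\<dots> = ?R * (mat_adj (Z1 \<oplus>\<^sub>d Z2) * mat_adj ?R)"
    by (simp add: mat_adj_mult[OF rotation_mat_carrier Z_carrier] mat_adj_rotation_mat)
  also have "\<dots> = ?R * ((Z1 \<oplus>\<^sub>d Z2) * ?R')"
    using Z by (simp add: hermitian_form_def mat_adj_rotation_mat)
  also have "\<dots> = ?R * (Z1 \<oplus>\<^sub>d Z2) * ?R'"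
    by (rule assoc_mult_mat[OF rotation_mat_carrier Z_carrier rotation_mat_carrier, symmetric])
  finally have adj: "mat_adj (?R * (Z1 \<oplus>\<^sub>d Z2) * ?R') = ?R * (Z1 \<oplus>\<^sub>d Z2) * ?R'" .
  have inv: "invertible_mat (?R * (Z1 \<oplus>\<^sub>d Z2) * ?R')"
    using Z Z_carrier RZ cs
    by (intro invertible_mat_mult[of _ "m + m"] invertible_rotation_mat) (auto simp: hermitian_form_def)
  have entries: "(?R * (Z1 \<oplus>\<^sub>d Z2) * ?R') $$ (i, j) \<in> S" if "i < m + m" "j < m + m" for i j
    using that Z1 Z2 hermitian_form_carrier[OF Z1] hermitian_form_carrier[OF Z2]
    by (cases "i < m"; cases "j < m")
      (simp_all add: rotation_mat_conj_index hermitian_form_entry S operator_system_add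
        operator_system_diff operator_system_scaleR)
  have carrier: "?R * (Z1 \<oplus>\<^sub>d Z2) * ?R' \<in> carrier_mat (m + m) (m + m)"
    by (rule mult_carrier_mat[OF RZ rotation_mat_carrier])
  then have "dim_row (?R * (Z1 \<oplus>\<^sub>d Z2) * ?R') = m + m" "dim_col (?R * (Z1 \<oplus>\<^sub>d Z2) * ?R') = m + m"
    by auto
  then show ?thesis
    unfolding hermitian_form_def mat_entries_subset_iff using carrier adj inv entries by (simp del: index_mult_mat)
qed

lemma herm_homotopic_swap:
  fixes S :: "'a::cstar_algebra set"
  assumes S: "operator_system S" and Z1: "hermitian_form S m Z1" and Z2: "hermitian_form S m Z2"
  shows "herm_homotopic S (m + m) (Z1 \<oplus>\<^sub>d Z2) (Z2 \<oplus>\<^sub>d Z1)"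
proof -
  define c where "c t = cos (t * pi / 2)" for t
  define s where "s t = sin (t * pi / 2)" for t
  define G where "G t = rotation_mat m (c t) (s t) * (Z1 \<oplus>\<^sub>d Z2) * rotation_mat m (c t) (- s t)" for t
  have cs: "s t * s t + c t * c t = 1" for t
    using sin_cos_squared_add[of "t * pi / 2"] by (simp add: c_def s_def power2_eq_square)
  have carriers: "Z1 \<in> carrier_mat m m" "Z2 \<in> carrier_mat m m"
    using Z1 Z2 by (auto dest: hermitian_form_carrier)
  have G_index: "G t $$ (i, j) =
    (if i < m then
       if j < m then (c t * c t) *\<^sub>R Z1 $$ (i, j) + (s t * s t) *\<^sub>R Z2 $$ (i, j)
       else (c t * s t) *\<^sub>R Z1 $$ (i, j - m) - (c t * s t) *\<^sub>R Z2 $$ (i, j - m)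
     else
       if j < m then (c t * s t) *\<^sub>R Z1 $$ (i - m, j) - (c t * s t) *\<^sub>R Z2 $$ (i - m, j)
       else (s t * s t) *\<^sub>R Z1 $$ (i - m, j - m) + (c t * c t) *\<^sub>R Z2 $$ (i - m, j - m))"
    if "i < m + m" "j < m + m" for t i j
    unfolding G_def using carriers that by (rule rotation_mat_conj_index)
  have G_carrier: "G t \<in> carrier_mat (m + m) (m + m)" for t
    unfolding G_def
    by (rule mult_carrier_mat[OF mult_carrier_mat[OF rotation_mat_carrier dsum_carrier[OF carriers]]
          rotation_mat_carrier])
  have "continuous_on {0..1} (\<lambda>t. G t $$ (i, j))" if "i < m + m" "j < m + m" for i j
    using that unfolding G_index[OF that] c_def s_def
    by (cases "i < m"; cases "j < m") (simp_all add: continuous_intros)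
  moreover have "G 0 = Z1 \<oplus>\<^sub>d Z2" "G 1 = Z2 \<oplus>\<^sub>d Z1"
    by (rule eq_matI;
        use carriers G_carrier in \<open>auto simp: G_index dsum_index c_def s_def\<close>)+
  moreover have "hermitian_form S (m + m) (G t)" for t
    unfolding G_def using S Z1 Z2 cs by (rule hermitian_form_rotation_conj)
  ultimately show ?thesis
    unfolding herm_homotopic_def by (intro exI[of _ G]) auto
qed

section \<open>The stable relation\<close>

lemma herm_forms_dsum_one_mat: "operator_system S \<Longrightarrow> X \<in> herm_forms S \<Longrightarrow> X \<oplus>\<^sub>d 1\<^sub>m p \<in> herm_forms S"
  using hermitian_form_dsum[OF _ herm_formsD hermitian_form_one] herm_forms_dim_ge_1
  by (metis herm_formsI dsum_dim(1) le_add1 order_trans)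

lemma stable_relI:
  assumes "A \<in> herm_forms S" "B \<in> herm_forms S" "dim_row A + m = k" "dim_row B + n = k"
    and "herm_homotopic S k (A \<oplus>\<^sub>d 1\<^sub>m m) (B \<oplus>\<^sub>d 1\<^sub>m n)"
  shows "(A, B) \<in> stable_rel S"
proof -
  have "k - dim_row A = m" "k - dim_row B = n" "dim_row A \<le> k" "dim_row B \<le> k"
    using assms(3,4) by auto
  then show ?thesis
    unfolding stable_rel_def using assms(1,2,5) by auto
qed

lemma herm_homotopic_pad:
  fixes S :: "'a::cstar_algebra set"
  assumes S: "operator_system S" and h: "herm_homotopic S k (X \<oplus>\<^sub>d 1\<^sub>m (k - a)) (X' \<oplus>\<^sub>d 1\<^sub>m (k - a'))"
    and "a \<le> k" "a' \<le> k" "k \<le> k'"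
  shows "herm_homotopic S k' (X \<oplus>\<^sub>d 1\<^sub>m (k' - a)) (X' \<oplus>\<^sub>d 1\<^sub>m (k' - a'))"
proof -
  have "herm_homotopic S (k + (k' - k)) ((X \<oplus>\<^sub>d 1\<^sub>m (k - a)) \<oplus>\<^sub>d 1\<^sub>m (k' - k))
      ((X' \<oplus>\<^sub>d 1\<^sub>m (k - a')) \<oplus>\<^sub>d 1\<^sub>m (k' - k))"
    by (rule herm_homotopic_dsum[OF S h herm_homotopic_refl[OF hermitian_form_one[OF S]]])
  moreover have "k + (k' - k) = k'" "k - a + (k' - k) = k' - a" "k - a' + (k' - k) = k' - a'"
    using assms(3-5) by auto
  ultimately show ?thesis
    by (simp add: dsum_assoc dsum_one_mat)
qed

lemma stable_relE:
  fixes S :: "'a::cstar_algebra set"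
  assumes S: "operator_system S" and "(X, X') \<in> stable_rel S"
  obtains k where "K \<le> k" "dim_row X \<le> k" "dim_row X' \<le> k"
    "herm_homotopic S k (X \<oplus>\<^sub>d 1\<^sub>m (k - dim_row X)) (X' \<oplus>\<^sub>d 1\<^sub>m (k - dim_row X'))"
proof -
  obtain k where "dim_row X \<le> k" "dim_row X' \<le> k"
    and "herm_homotopic S k (X \<oplus>\<^sub>d 1\<^sub>m (k - dim_row X)) (X' \<oplus>\<^sub>d 1\<^sub>m (k - dim_row X'))"
    using assms(2) unfolding stable_rel_def by blast
  then show ?thesis
    using herm_homotopic_pad[OF S, of k X "dim_row X" X' "dim_row X'" "max k K"] that[of "max k K"]
    by auto
qed

lemma stable_rel_herm_forms: "(X, Y) \<in> stable_rel S \<Longrightarrow> X \<in> herm_forms S \<and> Y \<in> herm_forms S"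
  unfolding stable_rel_def by blast

lemma stable_rel_refl: "operator_system S \<Longrightarrow> X \<in> herm_forms S \<Longrightarrow> (X, X) \<in> stable_rel S"
  using herm_forms_dsum_one_mat[of S X 0] herm_formsD[of "X \<oplus>\<^sub>d 1\<^sub>m 0" S]
  by (intro stable_relI[of _ _ _ 0 _ 0] herm_homotopic_refl) auto

lemma stable_rel_sym: "(X, Y) \<in> stable_rel S \<Longrightarrow> (Y, X) \<in> stable_rel S"
  unfolding stable_rel_def using herm_homotopic_sym by blast

lemma stable_rel_trans:
  fixes S :: "'a::cstar_algebra set"
  assumes S: "operator_system S" and XY: "(X, Y) \<in> stable_rel S" and YZ: "(Y, Z) \<in> stable_rel S"
  shows "(X, Z) \<in> stable_rel S"
proof -
  obtain l where l: "dim_row Y \<le> l" "dim_row Z \<le> l"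
    and YZ_l: "herm_homotopic S l (Y \<oplus>\<^sub>d 1\<^sub>m (l - dim_row Y)) (Z \<oplus>\<^sub>d 1\<^sub>m (l - dim_row Z))"
    using stable_relE[OF S YZ] .
  obtain k where k: "l \<le> k" "dim_row X \<le> k" "dim_row Y \<le> k"
    and XY_k: "herm_homotopic S k (X \<oplus>\<^sub>d 1\<^sub>m (k - dim_row X)) (Y \<oplus>\<^sub>d 1\<^sub>m (k - dim_row Y))"
    using stable_relE[OF S XY] .
  have "herm_homotopic S k (Y \<oplus>\<^sub>d 1\<^sub>m (k - dim_row Y)) (Z \<oplus>\<^sub>d 1\<^sub>m (k - dim_row Z))"
    by (rule herm_homotopic_pad[OF S YZ_l l k(1)])
  then show ?thesis
    using XY YZ k l stable_rel_herm_forms herm_homotopic_trans[OF XY_k]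
    unfolding stable_rel_def by fastforce
qed

lemma equiv_stable_rel:
  fixes S :: "'a::cstar_algebra set"
  assumes S: "operator_system S"
  shows "equiv (herm_forms S) (stable_rel S)"
proof (rule equivI)
  show "refl_on (herm_forms S) (stable_rel S)"
    unfolding refl_on_def using stable_rel_refl[OF S] stable_rel_herm_forms by blast
  show "sym (stable_rel S)"
    unfolding sym_def using stable_rel_sym by blast
  show "trans (stable_rel S)"
    unfolding trans_def using stable_rel_trans[OF S] by blast
  show "stable_rel S \<subseteq> herm_forms S \<times> herm_forms S"
    unfolding stable_rel_def by auto
qed

lemma stable_rel_if_herm_homotopic:
  "X \<in> herm_forms S \<Longrightarrow> Y \<in> herm_forms S \<Longrightarrow> dim_row X = k \<Longrightarrow> dim_row Y = k \<Longrightarrow>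
    herm_homotopic S k X Y \<Longrightarrow> (X, Y) \<in> stable_rel S"
  by (rule stable_relI[of _ _ _ 0 k 0]) auto

lemma stable_rel_dsum_one_mat:
  "operator_system S \<Longrightarrow> X \<in> herm_forms S \<Longrightarrow> (X \<oplus>\<^sub>d 1\<^sub>m p, X) \<in> stable_rel S"
  using herm_forms_dsum_one_mat[of S X p] herm_formsD[of "X \<oplus>\<^sub>d 1\<^sub>m p" S]
  by (intro stable_relI[of _ _ _ 0 "dim_row X + p" p]) (auto intro: herm_homotopic_refl)

text \<open>Swapping \<open>Y\<close> past an identity block of a different size \<open>p\<close> needs room: after padding,
  it is a composition of two swaps of blocks of equal size.\<close>

lemma herm_homotopic_move_one_mat:
  fixes S :: "'a::cstar_algebra set"
  assumes S: "operator_system S" and Y: "hermitian_form S b Y"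
  shows "herm_homotopic S (b + p + (b + p)) ((Y \<oplus>\<^sub>d 1\<^sub>m p) \<oplus>\<^sub>d 1\<^sub>m (b + p)) ((1\<^sub>m p \<oplus>\<^sub>d Y) \<oplus>\<^sub>d 1\<^sub>m (b + p))"
proof -
  have one: "herm_homotopic S n (1\<^sub>m n) (1\<^sub>m n)" for n
    by (rule herm_homotopic_refl[OF hermitian_form_one[OF S]])
  have "herm_homotopic S (b + p + (b + p)) ((Y \<oplus>\<^sub>d 1\<^sub>m p) \<oplus>\<^sub>d 1\<^sub>m (b + p)) (1\<^sub>m (b + p) \<oplus>\<^sub>d (Y \<oplus>\<^sub>d 1\<^sub>m p))"
    by (rule herm_homotopic_swap[OF S hermitian_form_dsum[OF S Y hermitian_form_one[OF S]] hermitian_form_one[OF S]])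
  moreover have "herm_homotopic S (p + (b + b) + p) ((1\<^sub>m p \<oplus>\<^sub>d (1\<^sub>m b \<oplus>\<^sub>d Y)) \<oplus>\<^sub>d 1\<^sub>m p)
      ((1\<^sub>m p \<oplus>\<^sub>d (Y \<oplus>\<^sub>d 1\<^sub>m b)) \<oplus>\<^sub>d 1\<^sub>m p)"
    by (intro herm_homotopic_dsum[OF S] one herm_homotopic_swap[OF S hermitian_form_one[OF S] Y])
  moreover have "1\<^sub>m (b + p) = (1\<^sub>m p \<oplus>\<^sub>d 1\<^sub>m b :: 'a mat)"
    by (simp add: dsum_one_mat add.commute)
  then have "1\<^sub>m (b + p) \<oplus>\<^sub>d (Y \<oplus>\<^sub>d 1\<^sub>m p) = (1\<^sub>m p \<oplus>\<^sub>d (1\<^sub>m b \<oplus>\<^sub>d Y)) \<oplus>\<^sub>d 1\<^sub>m p"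
    by (simp add: dsum_assoc)
  moreover have "(1\<^sub>m p \<oplus>\<^sub>d (Y \<oplus>\<^sub>d 1\<^sub>m b)) \<oplus>\<^sub>d 1\<^sub>m p = (1\<^sub>m p \<oplus>\<^sub>d Y) \<oplus>\<^sub>d 1\<^sub>m (b + p)"
    "p + (b + b) + p = b + p + (b + p)"
    by (simp_all add: dsum_assoc dsum_one_mat add.commute)
  ultimately show ?thesis
    by (metis herm_homotopic_trans)
qed

lemma stable_rel_insert_one_mat:
  fixes S :: "'a::cstar_algebra set"
  assumes S: "operator_system S" and X: "X \<in> herm_forms S" and Y: "Y \<in> herm_forms S"
  shows "(X \<oplus>\<^sub>d Y, (X \<oplus>\<^sub>d 1\<^sub>m p) \<oplus>\<^sub>d Y) \<in> stable_rel S"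
proof -
  define a b where "a = dim_row X" and "b = dim_row Y"
  have "herm_homotopic S (a + (b + p + (b + p))) (X \<oplus>\<^sub>d ((Y \<oplus>\<^sub>d 1\<^sub>m p) \<oplus>\<^sub>d 1\<^sub>m (b + p)))
      (X \<oplus>\<^sub>d ((1\<^sub>m p \<oplus>\<^sub>d Y) \<oplus>\<^sub>d 1\<^sub>m (b + p)))"
    using herm_formsD[OF X] herm_formsD[OF Y] unfolding a_def b_def
    by (intro herm_homotopic_dsum[OF S] herm_homotopic_refl herm_homotopic_move_one_mat[OF S])
  then have "herm_homotopic S (a + (b + p + (b + p))) ((X \<oplus>\<^sub>d Y) \<oplus>\<^sub>d 1\<^sub>m (p + (b + p)))
      (((X \<oplus>\<^sub>d 1\<^sub>m p) \<oplus>\<^sub>d Y) \<oplus>\<^sub>d 1\<^sub>m (b + p))"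
    by (simp add: dsum_assoc dsum_one_mat)
  then show ?thesis
    using S X Y by (intro stable_relI herm_forms_dsum herm_forms_dsum_one_mat) (auto simp: a_def b_def)
qed

lemma stable_rel_pad_blocks:
  fixes S :: "'a::cstar_algebra set"
  assumes S: "operator_system S" and X: "X \<in> herm_forms S" and Y: "Y \<in> herm_forms S"
  shows "(X \<oplus>\<^sub>d Y, (X \<oplus>\<^sub>d 1\<^sub>m p) \<oplus>\<^sub>d (Y \<oplus>\<^sub>d 1\<^sub>m q)) \<in> stable_rel S"
proof -
  have "(((X \<oplus>\<^sub>d 1\<^sub>m p) \<oplus>\<^sub>d Y) \<oplus>\<^sub>d 1\<^sub>m q, (X \<oplus>\<^sub>d 1\<^sub>m p) \<oplus>\<^sub>d Y) \<in> stable_rel S"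
    using S X Y by (intro stable_rel_dsum_one_mat herm_forms_dsum herm_forms_dsum_one_mat)
  then show ?thesis
    using stable_rel_trans[OF S stable_rel_insert_one_mat[OF S X Y] stable_rel_sym]
    by (simp add: dsum_assoc)
qed

lemma stable_rel_dsum:
  fixes S :: "'a::cstar_algebra set"
  assumes S: "operator_system S" and XX': "(X, X') \<in> stable_rel S" and YY': "(Y, Y') \<in> stable_rel S"
  shows "(X \<oplus>\<^sub>d Y, X' \<oplus>\<^sub>d Y') \<in> stable_rel S"
proof -
  obtain k where k: "dim_row X \<le> k" "dim_row X' \<le> k"
    and hX: "herm_homotopic S k (X \<oplus>\<^sub>d 1\<^sub>m (k - dim_row X)) (X' \<oplus>\<^sub>d 1\<^sub>m (k - dim_row X'))"
    using stable_relE[OF S XX'] .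
  obtain l where l: "dim_row Y \<le> l" "dim_row Y' \<le> l"
    and hY: "herm_homotopic S l (Y \<oplus>\<^sub>d 1\<^sub>m (l - dim_row Y)) (Y' \<oplus>\<^sub>d 1\<^sub>m (l - dim_row Y'))"
    using stable_relE[OF S YY'] .
  have forms: "X \<in> herm_forms S" "X' \<in> herm_forms S" "Y \<in> herm_forms S" "Y' \<in> herm_forms S"
    using XX' YY' stable_rel_herm_forms by blast+
  have "((X \<oplus>\<^sub>d 1\<^sub>m (k - dim_row X)) \<oplus>\<^sub>d (Y \<oplus>\<^sub>d 1\<^sub>m (l - dim_row Y)),
         (X' \<oplus>\<^sub>d 1\<^sub>m (k - dim_row X')) \<oplus>\<^sub>d (Y' \<oplus>\<^sub>d 1\<^sub>m (l - dim_row Y'))) \<in> stable_rel S"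
    using forms k l S herm_homotopic_dsum[OF S hX hY]
    by (intro stable_rel_if_herm_homotopic[where k = "k + l"] herm_forms_dsum herm_forms_dsum_one_mat) auto
  moreover have "(X \<oplus>\<^sub>d Y, (X \<oplus>\<^sub>d 1\<^sub>m (k - dim_row X)) \<oplus>\<^sub>d (Y \<oplus>\<^sub>d 1\<^sub>m (l - dim_row Y))) \<in> stable_rel S"
    "(X' \<oplus>\<^sub>d Y', (X' \<oplus>\<^sub>d 1\<^sub>m (k - dim_row X')) \<oplus>\<^sub>d (Y' \<oplus>\<^sub>d 1\<^sub>m (l - dim_row Y'))) \<in> stable_rel S"
    by (intro stable_rel_pad_blocks[OF S] forms)+
  ultimately show ?thesis
    using stable_rel_trans[OF S] stable_rel_sym by blast
qed

lemma stable_rel_dsum_commute: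
  fixes S :: "'a::cstar_algebra set"
  assumes S: "operator_system S" and X: "X \<in> herm_forms S" and Y: "Y \<in> herm_forms S"
  shows "(X \<oplus>\<^sub>d Y, Y \<oplus>\<^sub>d X) \<in> stable_rel S"
proof -
  define a b where "a = dim_row X" and "b = dim_row Y"
  have "hermitian_form S (a + b) (X \<oplus>\<^sub>d 1\<^sub>m b)"
    unfolding a_def b_def by (rule hermitian_form_dsum[OF S herm_formsD[OF X] hermitian_form_one[OF S]])
  moreover have "hermitian_form S (a + b) (Y \<oplus>\<^sub>d 1\<^sub>m a)"
    unfolding a_def b_def
    by (subst add.commute) (rule hermitian_form_dsum[OF S herm_formsD[OF Y] hermitian_form_one[OF S]])
  ultimately have "herm_homotopic S (a + b + (a + b)) ((X \<oplus>\<^sub>d 1\<^sub>m b) \<oplus>\<^sub>d (Y \<oplus>\<^sub>d 1\<^sub>m a)) ((Y \<oplus>\<^sub>d 1\<^sub>m a) \<oplus>\<^sub>d (X \<oplus>\<^sub>d 1\<^sub>m b))"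
    by (rule herm_homotopic_swap[OF S])
  then have "((X \<oplus>\<^sub>d 1\<^sub>m b) \<oplus>\<^sub>d (Y \<oplus>\<^sub>d 1\<^sub>m a), (Y \<oplus>\<^sub>d 1\<^sub>m a) \<oplus>\<^sub>d (X \<oplus>\<^sub>d 1\<^sub>m b)) \<in> stable_rel S"
    using S X Y by (intro stable_rel_if_herm_homotopic herm_forms_dsum herm_forms_dsum_one_mat)
      (auto simp: a_def b_def)
  moreover have "(X \<oplus>\<^sub>d Y, (X \<oplus>\<^sub>d 1\<^sub>m b) \<oplus>\<^sub>d (Y \<oplus>\<^sub>d 1\<^sub>m a)) \<in> stable_rel S"
    "(Y \<oplus>\<^sub>d X, (Y \<oplus>\<^sub>d 1\<^sub>m a) \<oplus>\<^sub>d (X \<oplus>\<^sub>d 1\<^sub>m b)) \<in> stable_rel S"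
    by (intro stable_rel_pad_blocks[OF S] X Y)+
  ultimately show ?thesis
    using stable_rel_trans[OF S] stable_rel_sym by blast
qed

section \<open>The monoid \<open>\<V>(S)\<close> and its Grothendieck group\<close>

lemma V_monoid_carrier: "carrier (V_monoid S) = herm_forms S // stable_rel S"
  and V_monoid_mult: "x \<otimes>\<^bsub>V_monoid S\<^esub> y = V_class S ((SOME X. X \<in> x) \<oplus>\<^sub>d (SOME Y. Y \<in> y))"
  and V_monoid_one: "\<one>\<^bsub>V_monoid S\<^esub> = V_class S (1\<^sub>m 1)"
  unfolding V_monoid_def by simp_all

lemma V_class_in_carrier: "X \<in> herm_forms S \<Longrightarrow> V_class S X \<in> carrier (V_monoid S)"
  unfolding V_monoid_carrier V_class_def by (rule quotientI)

lemma V_monoid_cases: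
  assumes "c \<in> carrier (V_monoid S)"
  obtains X where "X \<in> herm_forms S" "c = V_class S X"
  using assms unfolding V_monoid_carrier V_class_def by (auto elim: quotientE)

lemma V_class_eq:
  "operator_system S \<Longrightarrow> (X, Y) \<in> stable_rel S \<Longrightarrow> V_class S X = V_class S Y"
  unfolding V_class_def by (rule equiv_class_eq[OF equiv_stable_rel])

lemma stable_rel_some_V_class:
  assumes S: "operator_system S" and X: "X \<in> herm_forms S"
  shows "(X, SOME Z. Z \<in> V_class S X) \<in> stable_rel S"
proof -
  have "X \<in> V_class S X"
    unfolding V_class_def using stable_rel_refl[OF S X] by simp
  then have "(SOME Z. Z \<in> V_class S X) \<in> V_class S X"
    by (rule someI)
  then show ?thesis
    unfolding V_class_def by simp
qed

lemma V_class_mult: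
  assumes S: "operator_system S" and X: "X \<in> herm_forms S" and Y: "Y \<in> herm_forms S"
  shows "V_class S X \<otimes>\<^bsub>V_monoid S\<^esub> V_class S Y = V_class S (X \<oplus>\<^sub>d Y)"
  unfolding V_monoid_mult
  by (rule V_class_eq[OF S stable_rel_sym[OF stable_rel_dsum[OF S stable_rel_some_V_class[OF S X]
        stable_rel_some_V_class[OF S Y]]]])

lemma comm_monoid_V_monoid:
  fixes S :: "'a::cstar_algebra set"
  assumes S: "operator_system S"
  shows "comm_monoid (V_monoid S)"
proof (rule comm_monoidI)
  fix x y assume x: "x \<in> carrier (V_monoid S)" and y: "y \<in> carrier (V_monoid S)"
  obtain X where X: "X \<in> herm_forms S" "x = V_class S X"
    using x by (rule V_monoid_cases)
  obtain Y where Y: "Y \<in> herm_forms S" "y = V_class S Y"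
    using y by (rule V_monoid_cases)
  show "x \<otimes>\<^bsub>V_monoid S\<^esub> y \<in> carrier (V_monoid S)"
    unfolding X Y V_class_mult[OF S X(1) Y(1)] by (rule V_class_in_carrier[OF herm_forms_dsum[OF S X(1) Y(1)]])
  show "x \<otimes>\<^bsub>V_monoid S\<^esub> y = y \<otimes>\<^bsub>V_monoid S\<^esub> x"
    unfolding X Y V_class_mult[OF S X(1) Y(1)] V_class_mult[OF S Y(1) X(1)]
    by (rule V_class_eq[OF S stable_rel_dsum_commute[OF S X(1) Y(1)]])
next
  show "\<one>\<^bsub>V_monoid S\<^esub> \<in> carrier (V_monoid S)"
    unfolding V_monoid_one by (rule V_class_in_carrier[OF one_in_herm_forms[OF S]])
next
  fix x y z assume x: "x \<in> carrier (V_monoid S)" and y: "y \<in> carrier (V_monoid S)"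
    and z: "z \<in> carrier (V_monoid S)"
  obtain X where X: "X \<in> herm_forms S" "x = V_class S X"
    using x by (rule V_monoid_cases)
  obtain Y where Y: "Y \<in> herm_forms S" "y = V_class S Y"
    using y by (rule V_monoid_cases)
  obtain Z where Z: "Z \<in> herm_forms S" "z = V_class S Z"
    using z by (rule V_monoid_cases)
  show "x \<otimes>\<^bsub>V_monoid S\<^esub> y \<otimes>\<^bsub>V_monoid S\<^esub> z = x \<otimes>\<^bsub>V_monoid S\<^esub> (y \<otimes>\<^bsub>V_monoid S\<^esub> z)"
    unfolding X(2) Y(2) Z(2) V_class_mult[OF S X(1) Y(1)] V_class_mult[OF S Y(1) Z(1)]
      V_class_mult[OF S herm_forms_dsum[OF S X(1) Y(1)] Z(1)]
      V_class_mult[OF S X(1) herm_forms_dsum[OF S Y(1) Z(1)]] dsum_assoc ..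
next
  fix x assume "x \<in> carrier (V_monoid S)"
  then obtain X where X: "X \<in> herm_forms S" "x = V_class S X"
    by (rule V_monoid_cases)
  have "\<one>\<^bsub>V_monoid S\<^esub> \<otimes>\<^bsub>V_monoid S\<^esub> x = V_class S (1\<^sub>m 1 \<oplus>\<^sub>d X)"
    unfolding V_monoid_one X(2) by (rule V_class_mult[OF S one_in_herm_forms[OF S] X(1)])
  also have "\<dots> = V_class S (X \<oplus>\<^sub>d 1\<^sub>m 1)"
    by (rule V_class_eq[OF S stable_rel_dsum_commute[OF S one_in_herm_forms[OF S] X(1)]])
  also have "\<dots> = x"
    unfolding X(2) by (rule V_class_eq[OF S stable_rel_dsum_one_mat[OF S X(1)]])
  finally show "\<one>\<^bsub>V_monoid S\<^esub> \<otimes>\<^bsub>V_monoid S\<^esub> x = x" .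
qed

context comm_monoid
begin

lemma groth_rel_iff:
  "((a, b), (c, d)) \<in> groth_rel G \<longleftrightarrow> a \<in> carrier G \<and> b \<in> carrier G \<and> c \<in> carrier G \<and> d \<in> carrier G
     \<and> (\<exists>k \<in> carrier G. a \<otimes> d \<otimes> k = c \<otimes> b \<otimes> k)"
  unfolding groth_rel_def by simp

lemma equiv_groth_rel: "equiv (carrier G \<times> carrier G) (groth_rel G)"
proof (rule equivI)
  show "groth_rel G \<subseteq> (carrier G \<times> carrier G) \<times> (carrier G \<times> carrier G)"
    unfolding groth_rel_def by auto
  show "refl_on (carrier G \<times> carrier G) (groth_rel G)"
    unfolding refl_on_def groth_rel_def by auto
  show "sym (groth_rel G)"
    unfolding sym_def groth_rel_def by (auto dest: sym)
  show "trans (groth_rel G)"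
    unfolding trans_def
  proof (clarify)
    fix a b c d e f
    assume "((a, b), (c, d)) \<in> groth_rel G" "((c, d), (e, f)) \<in> groth_rel G"
    then obtain k l where carriers: "a \<in> carrier G" "b \<in> carrier G" "c \<in> carrier G" "d \<in> carrier G"
        "e \<in> carrier G" "f \<in> carrier G" "k \<in> carrier G" "l \<in> carrier G"
      and k: "a \<otimes> d \<otimes> k = c \<otimes> b \<otimes> k" and l: "c \<otimes> f \<otimes> l = e \<otimes> d \<otimes> l"
      unfolding groth_rel_iff by blast
    have "a \<otimes> f \<otimes> (c \<otimes> d \<otimes> k \<otimes> l) = (a \<otimes> d \<otimes> k) \<otimes> (c \<otimes> f \<otimes> l)"
      using carriers by (simp add: m_ac)
    also have "\<dots> = (c \<otimes> b \<otimes> k) \<otimes> (e \<otimes> d \<otimes> l)"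
      by (simp only: k l)
    also have "\<dots> = e \<otimes> b \<otimes> (c \<otimes> d \<otimes> k \<otimes> l)"
      using carriers by (simp add: m_ac)
    finally show "((a, b), (e, f)) \<in> groth_rel G"
      unfolding groth_rel_iff using carriers by blast
  qed
qed

lemma groth_class_in_carrier:
  "a \<in> carrier G \<Longrightarrow> b \<in> carrier G \<Longrightarrow> groth_class G a b \<in> carrier (groth_group G)"
  unfolding groth_class_def groth_group_def by (simp add: quotientI)

lemma groth_group_cases:
  assumes "p \<in> carrier (groth_group G)"
  obtains a b where "a \<in> carrier G" "b \<in> carrier G" "p = groth_class G a b"
  using assms unfolding groth_class_def groth_group_def by (auto elim!: quotientE)

lemma groth_class_eq: "((a, b), (c, d)) \<in> groth_rel G \<Longrightarrow> groth_class G a b = groth_class G c d"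
  unfolding groth_class_def by (rule equiv_class_eq[OF equiv_groth_rel])

lemma groth_rel_some:
  assumes "a \<in> carrier G" "b \<in> carrier G"
  shows "((a, b), (SOME x. x \<in> groth_class G a b)) \<in> groth_rel G"
proof -
  have "(a, b) \<in> groth_class G a b"
    unfolding groth_class_def using equiv_groth_rel assms by (auto simp: equiv_def refl_on_def)
  then have "(SOME x. x \<in> groth_class G a b) \<in> groth_class G a b"
    by (rule someI)
  then show ?thesis
    unfolding groth_class_def by simp
qed

lemma groth_rel_mult:
  assumes "((a, b), (a', b')) \<in> groth_rel G" "((c, d), (c', d')) \<in> groth_rel G"
  shows "((a \<otimes> c, b \<otimes> d), (a' \<otimes> c', b' \<otimes> d')) \<in> groth_rel G"
proof -
  obtain k l where carriers: "a \<in> carrier G" "b \<in> carrier G" "a' \<in> carrier G" "b' \<in> carrier G"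
      "c \<in> carrier G" "d \<in> carrier G" "c' \<in> carrier G" "d' \<in> carrier G" "k \<in> carrier G" "l \<in> carrier G"
    and k: "a \<otimes> b' \<otimes> k = a' \<otimes> b \<otimes> k" and l: "c \<otimes> d' \<otimes> l = c' \<otimes> d \<otimes> l"
    using assms unfolding groth_rel_iff by blast
  have "a \<otimes> c \<otimes> (b' \<otimes> d') \<otimes> (k \<otimes> l) = (a \<otimes> b' \<otimes> k) \<otimes> (c \<otimes> d' \<otimes> l)"
    using carriers by (simp add: m_ac)
  also have "\<dots> = (a' \<otimes> b \<otimes> k) \<otimes> (c' \<otimes> d \<otimes> l)"
    by (simp only: k l)
  also have "\<dots> = a' \<otimes> c' \<otimes> (b \<otimes> d) \<otimes> (k \<otimes> l)"
    using carriers by (simp add: m_ac)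
  finally show ?thesis
    unfolding groth_rel_iff using carriers by blast
qed

lemma groth_class_mult:
  assumes "a \<in> carrier G" "b \<in> carrier G" "c \<in> carrier G" "d \<in> carrier G"
  shows "groth_class G a b \<otimes>\<^bsub>groth_group G\<^esub> groth_class G c d = groth_class G (a \<otimes> c) (b \<otimes> d)"
proof -
  obtain a' b' where ab: "(SOME x. x \<in> groth_class G a b) = (a', b')"
    by fastforce
  obtain c' d' where cd: "(SOME x. x \<in> groth_class G c d) = (c', d')"
    by fastforce
  have "((a \<otimes> c, b \<otimes> d), (a' \<otimes> c', b' \<otimes> d')) \<in> groth_rel G"
    using groth_rel_mult groth_rel_some[OF assms(1,2)] groth_rel_some[OF assms(3,4)] ab cd by simp
  then show ?thesis
    unfolding groth_group_def by (simp add: ab cd groth_class_eq)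
qed

end

definition groth_map :: "('m \<Rightarrow> 'n) \<Rightarrow> ('n, 'y) monoid_scheme \<Rightarrow> ('m \<times> 'm) set \<Rightarrow> ('n \<times> 'n) set" where
  "groth_map h N p = (case SOME x. x \<in> p of (a, b) \<Rightarrow> groth_class N (h a) (h b))"

lemma groth_rel_hom:
  assumes M: "comm_monoid M" and N: "comm_monoid N" and h: "h \<in> hom M N"
    and r: "((a, b), (c, d)) \<in> groth_rel M"
  shows "((h a, h b), (h c, h d)) \<in> groth_rel N"
proof -
  interpret M: comm_monoid M by (rule M)
  interpret N: comm_monoid N by (rule N)
  obtain k where carriers: "a \<in> carrier M" "b \<in> carrier M" "c \<in> carrier M" "d \<in> carrier M" "k \<in> carrier M"
    and k: "a \<otimes>\<^bsub>M\<^esub> d \<otimes>\<^bsub>M\<^esub> k = c \<otimes>\<^bsub>M\<^esub> b \<otimes>\<^bsub>M\<^esub> k"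
    using r unfolding M.groth_rel_iff by blast
  have "h a \<otimes>\<^bsub>N\<^esub> h d \<otimes>\<^bsub>N\<^esub> h k = h c \<otimes>\<^bsub>N\<^esub> h b \<otimes>\<^bsub>N\<^esub> h k"
    using arg_cong[OF k, of h] carriers by (simp add: hom_mult[OF h])
  then show ?thesis
    unfolding N.groth_rel_iff using carriers hom_in_carrier[OF h] by blast
qed

lemma groth_map_class:
  assumes M: "comm_monoid M" and N: "comm_monoid N" and h: "h \<in> hom M N"
    and "a \<in> carrier M" "b \<in> carrier M"
  shows "groth_map h N (groth_class M a b) = groth_class N (h a) (h b)"
proof -
  interpret M: comm_monoid M by (rule M)
  interpret N: comm_monoid N by (rule N)
  obtain c d where cd: "(SOME x. x \<in> groth_class M a b) = (c, d)"
    by fastforce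
  have "((h a, h b), (h c, h d)) \<in> groth_rel N"
    using groth_rel_hom[OF M N h] M.groth_rel_some[OF assms(4,5)] cd by simp
  then show ?thesis
    unfolding groth_map_def cd by (simp add: N.groth_class_eq)
qed

lemma groth_map_hom:
  assumes M: "comm_monoid M" and N: "comm_monoid N" and h: "h \<in> hom M N"
  shows "groth_map h N \<in> hom (groth_group M) (groth_group N)"
proof (rule homI)
  interpret M: comm_monoid M by (rule M)
  interpret N: comm_monoid N by (rule N)
  fix x assume "x \<in> carrier (groth_group M)"
  then obtain a b where "a \<in> carrier M" "b \<in> carrier M" "x = groth_class M a b"
    by (rule M.groth_group_cases)
  then show "groth_map h N x \<in> carrier (groth_group N)"
    using groth_map_class[OF M N h] hom_in_carrier[OF h] by (simp add: N.groth_class_in_carrier)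
next
  interpret M: comm_monoid M by (rule M)
  interpret N: comm_monoid N by (rule N)
  fix x y assume x: "x \<in> carrier (groth_group M)" and y: "y \<in> carrier (groth_group M)"
  obtain a b where ab: "a \<in> carrier M" "b \<in> carrier M" "x = groth_class M a b"
    using x by (rule M.groth_group_cases)
  obtain c d where cd: "c \<in> carrier M" "d \<in> carrier M" "y = groth_class M c d"
    using y by (rule M.groth_group_cases)
  show "groth_map h N (x \<otimes>\<^bsub>groth_group M\<^esub> y) = groth_map h N x \<otimes>\<^bsub>groth_group N\<^esub> groth_map h N y"
    using ab cd hom_in_carrier[OF h]
    by (simp add: M.groth_class_mult N.groth_class_mult groth_map_class[OF M N h] hom_mult[OF h])
qed

section \<open>Functoriality\<close>

lemma semiring_hom_star_hom: "star_hom f \<Longrightarrow> f 1 = 1 \<Longrightarrow> semiring_hom f"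
  by unfold_locales (simp_all add: star_hom_add star_hom_mult star_hom_zero)

lemma hermitian_form_map_mat:
  fixes f :: "'a::cstar_algebra \<Rightarrow> 'b::cstar_algebra"
  assumes hom: "star_hom f" and unital: "f 1 = 1" and into: "f ` S \<subseteq> T" and X: "hermitian_form S n X"
  shows "hermitian_form T n (map_mat f X)"
proof -
  have carrier: "X \<in> carrier_mat n n" and adj_X: "mat_adj X = X" and inv: "invertible_mat X"
    using X by (auto simp: hermitian_form_def)
  have "mat_entries (map_mat f X) \<subseteq> T"
    using carrier hermitian_form_entry[OF X] into by (auto simp: mat_entries_subset_iff)
  moreover have "mat_adj (map_mat f X) = map_mat f X"
  proof (rule eq_matI)
    fix i j assume "i < dim_row (map_mat f X)" "j < dim_col (map_mat f X)"
    then have "i < n" "j < n"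
      using carrier by auto
    moreover have "X $$ (i, j) = adj (X $$ (j, i))" if "i < n" "j < n"
      using arg_cong[OF adj_X, of "\<lambda>M. M $$ (i, j)"] that carrier by simp
    ultimately show "mat_adj (map_mat f X) $$ (i, j) = map_mat f X $$ (i, j)"
      using carrier by (simp add: star_hom_adj[OF hom])
  qed (use carrier in auto)
  moreover have "invertible_mat (map_mat f X)"
    by (rule invertible_mat_map_mat[OF semiring_hom_star_hom[OF hom unital] inv carrier])
  ultimately show ?thesis
    using carrier by (simp add: hermitian_form_def)
qed

lemma herm_forms_map_mat:
  fixes f :: "'a::cstar_algebra \<Rightarrow> 'b::cstar_algebra"
  assumes "star_hom f" "f 1 = 1" "f ` S \<subseteq> T" "X \<in> herm_forms S"
  shows "map_mat f X \<in> herm_forms T"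
  using hermitian_form_map_mat[OF assms(1-3) herm_formsD[OF assms(4)]] herm_forms_dim_ge_1[OF assms(4)]
  by (intro herm_formsI[of _ "dim_row X"]) auto

lemma map_mat_cong_herm_forms:
  fixes f g :: "'a::cstar_algebra \<Rightarrow> 'b::cstar_algebra"
  assumes X: "X \<in> herm_forms S" and fg: "\<And>x. x \<in> S \<Longrightarrow> f x = g x"
  shows "map_mat f X = map_mat g X"
proof (rule eq_matI)
  fix i j assume ij: "i < dim_row (map_mat g X)" "j < dim_col (map_mat g X)"
  have "dim_col X = dim_row X"
    using carrier_matD(2)[OF hermitian_form_carrier[OF herm_formsD[OF X]]] .
  with ij have "X $$ (i, j) \<in> S"
    by (intro hermitian_form_entry[OF herm_formsD[OF X]]) simp_all
  then show "map_mat f X $$ (i, j) = map_mat g X $$ (i, j)"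
    using ij fg by simp
qed simp_all

lemma herm_homotopic_map_mat:
  fixes f :: "'a::cstar_algebra \<Rightarrow> 'b::cstar_algebra"
  assumes hom: "star_hom f" and unital: "f 1 = 1" and into: "f ` S \<subseteq> T" and h: "herm_homotopic S k A B"
  shows "herm_homotopic T k (map_mat f A) (map_mat f B)"
proof -
  obtain g :: "real \<Rightarrow> 'a mat" where g: "\<forall>t\<in>{0..1}. hermitian_form S k (g t)"
    "\<forall>i<k. \<forall>j<k. continuous_on {0..1} (\<lambda>t. g t $$ (i, j))" "g 0 = A" "g 1 = B"
    using h unfolding herm_homotopic_def by blast
  have "continuous_on {0..1} (\<lambda>t. map_mat f (g t) $$ (i, j))" if ij: "i < k" "j < k" for i j
  proof (rule continuous_on_cong[THEN iffD1, OF refl])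
    show "continuous_on {0..1} (\<lambda>t. f (g t $$ (i, j)))"
      using bounded_linear.continuous_on[OF bounded_linear_star_hom[OF hom unital]] g(2) ij by blast
    show "f (g t $$ (i, j)) = map_mat f (g t) $$ (i, j)" if "t \<in> {0..1}" for t
      using hermitian_form_carrier g(1) that ij by fastforce
  qed
  then show ?thesis
    unfolding herm_homotopic_def using g hermitian_form_map_mat[OF hom unital into]
    by (intro exI[of _ "\<lambda>t. map_mat f (g t)"]) auto
qed

lemma map_mat_one_mat: "f 0 = 0 \<Longrightarrow> f 1 = 1 \<Longrightarrow> map_mat f (1\<^sub>m n) = 1\<^sub>m n"
  by (rule eq_matI) auto

lemma stable_rel_map_mat:
  fixes f :: "'a::cstar_algebra \<Rightarrow> 'b::cstar_algebra"
  assumes hom: "star_hom f" and unital: "f 1 = 1" and into: "f ` S \<subseteq> T" and r: "(X, X') \<in> stable_rel S"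
  shows "(map_mat f X, map_mat f X') \<in> stable_rel T"
proof -
  obtain k where k: "dim_row X \<le> k" "dim_row X' \<le> k"
    and h: "herm_homotopic S k (X \<oplus>\<^sub>d 1\<^sub>m (k - dim_row X)) (X' \<oplus>\<^sub>d 1\<^sub>m (k - dim_row X'))"
    and forms: "X \<in> herm_forms S" "X' \<in> herm_forms S"
    using r unfolding stable_rel_def by blast
  have "herm_homotopic T k (map_mat f X \<oplus>\<^sub>d 1\<^sub>m (k - dim_row X)) (map_mat f X' \<oplus>\<^sub>d 1\<^sub>m (k - dim_row X'))"
    using herm_homotopic_map_mat[OF hom unital into h] star_hom_zero[OF hom] unital
    by (simp add: map_mat_dsum map_mat_one_mat)
  then show ?thesis
    unfolding stable_rel_def using k herm_forms_map_mat[OF hom unital into] forms by auto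
qed

definition V_map :: "('a::cstar_algebra \<Rightarrow> 'b::cstar_algebra) \<Rightarrow> 'b set \<Rightarrow> 'a mat set \<Rightarrow> 'b mat set" where
  "V_map f T c = V_class T (map_mat f (SOME X. X \<in> c))"

lemma V_map_V_class:
  fixes f :: "'a::cstar_algebra \<Rightarrow> 'b::cstar_algebra"
  assumes S: "operator_system S" and T: "operator_system T" and hom: "star_hom f" and unital: "f 1 = 1"
    and into: "f ` S \<subseteq> T" and X: "X \<in> herm_forms S"
  shows "V_map f T (V_class S X) = V_class T (map_mat f X)"
  unfolding V_map_def
  by (rule V_class_eq[OF T stable_rel_sym[OF stable_rel_map_mat[OF hom unital into stable_rel_some_V_class[OF S X]]]])

lemma V_map_hom:
  fixes f :: "'a::cstar_algebra \<Rightarrow> 'b::cstar_algebra"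
  assumes S: "operator_system S" and T: "operator_system T" and hom: "star_hom f" and unital: "f 1 = 1"
    and into: "f ` S \<subseteq> T"
  shows "V_map f T \<in> hom (V_monoid S) (V_monoid T)"
proof (rule homI)
  fix x assume "x \<in> carrier (V_monoid S)"
  then obtain X where X: "X \<in> herm_forms S" "x = V_class S X"
    by (rule V_monoid_cases)
  then show "V_map f T x \<in> carrier (V_monoid T)"
    by (simp add: V_map_V_class[OF assms] V_class_in_carrier herm_forms_map_mat[OF hom unital into])
next
  fix x y assume x: "x \<in> carrier (V_monoid S)" and y: "y \<in> carrier (V_monoid S)"
  obtain X where X: "X \<in> herm_forms S" "x = V_class S X"
    using x by (rule V_monoid_cases)
  obtain Y where Y: "Y \<in> herm_forms S" "y = V_class S Y"
    using y by (rule V_monoid_cases)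
  show "V_map f T (x \<otimes>\<^bsub>V_monoid S\<^esub> y) = V_map f T x \<otimes>\<^bsub>V_monoid T\<^esub> V_map f T y"
    unfolding X(2) Y(2) V_class_mult[OF S X(1) Y(1)] V_map_V_class[OF assms herm_forms_dsum[OF S X(1) Y(1)]]
      V_map_V_class[OF assms X(1)] V_map_V_class[OF assms Y(1)] map_mat_dsum[of f, OF star_hom_zero[OF hom]]
    by (rule V_class_mult[OF T herm_forms_map_mat[OF hom unital into X(1)]
          herm_forms_map_mat[OF hom unital into Y(1)], symmetric])
qed

theorem proposition3p19:
  fixes E :: "'a::cstar_algebra set" and F :: "'b::cstar_algebra set"
    and \<phi> :: "'a \<Rightarrow> 'b" and \<phi>t :: "'a \<Rightarrow> 'b"
  assumes envE: "is_cstar_envelope E"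
    and envF: "is_cstar_envelope F"
    and ucp: "ucp_map E F \<phi>"
    and hom: "star_hom \<phi>t"
    and restr: "\<forall>x\<in>E. \<phi> x = \<phi>t x"
  shows "\<exists>\<psi> \<Psi>.
      (\<forall>X \<in> herm_forms E. map_mat \<phi> X \<in> herm_forms F
          \<and> \<psi> (V_class E X) = V_class F (map_mat \<phi> X))
    \<and> \<psi> \<in> hom (V_monoid E) (V_monoid F)
    \<and> \<Psi> \<in> hom (K0 E) (K0 F)
    \<and> (\<forall>a \<in> carrier (V_monoid E). \<forall>b \<in> carrier (V_monoid E).
          \<Psi> (groth_class (V_monoid E) a b) = groth_class (V_monoid F) (\<psi> a) (\<psi> b))"
proof -
  have E: "operator_system E" and F: "operator_system F"
    using envE envF by (auto simp: is_cstar_envelope_def)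
  have unital: "\<phi>t 1 = 1" and into: "\<phi>t ` E \<subseteq> F"
    using ucp restr operator_system_one[OF E] by (auto simp: ucp_map_def)
  have map_eq: "map_mat \<phi> X = map_mat \<phi>t X" if "X \<in> herm_forms E" for X
    using that restr by (intro map_mat_cong_herm_forms) auto
  define \<psi> where "\<psi> = V_map \<phi>t F"
  have \<psi>: "\<psi> \<in> hom (V_monoid E) (V_monoid F)"
    unfolding \<psi>_def by (rule V_map_hom[OF E F hom unital into])
  show ?thesis
  proof (intro exI[of _ \<psi>] exI[of _ "groth_map \<psi> (V_monoid F)"] conjI ballI)
    fix X assume "X \<in> herm_forms E"
    then show "map_mat \<phi> X \<in> herm_forms F" "\<psi> (V_class E X) = V_class F (map_mat \<phi> X)"
      using herm_forms_map_mat[OF hom unital into] V_map_V_class[OF E F hom unital into]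
      by (simp_all add: map_eq \<psi>_def)
  next
    show "groth_map \<psi> (V_monoid F) \<in> hom (K0 E) (K0 F)"
      by (rule groth_map_hom[OF comm_monoid_V_monoid[OF E] comm_monoid_V_monoid[OF F] \<psi>])
    show "groth_map \<psi> (V_monoid F) (groth_class (V_monoid E) a b) = groth_class (V_monoid F) (\<psi> a) (\<psi> b)"
      if "a \<in> carrier (V_monoid E)" "b \<in> carrier (V_monoid E)" for a b
      using groth_map_class[OF comm_monoid_V_monoid[OF E] comm_monoid_V_monoid[OF F] \<psi> that] .
  qed (fact \<psi>)
qed

end
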